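(* Let $d=1$ and let $0<\delta<2/3$. The perturbed senile reinforced random walk (Model I) with parameter $\delta$ is diffusive: the limit $\nu(\delta)=\lim_{n\to\infty}\mathbb{E}[|S_n|^2]/n$ exists and is strictly positive, and it is given by \[ \nu(\delta)=\frac{\mathbb{P}(\tau \text{ odd})}{\mathbb{P}(\tau \text{ even})\,\mathbb{E}[\tau]} . \] Moreover $\nu(\delta)\to 0$ as $\delta\to0^+$, and $\nu(\delta)$ is of order $1/|\log\delta|$: there are constants $0<c\le C<\infty$ such that $c/|\log\delta|\le \nu(\delta)\le C/|\log\delta|$ for all sufficiently small $\delta>0$.
   Context: Model I on $\mathbb{Z}^d$ with parameter $\delta>0$: a sequence $(S_n)_{n\ge0}$ of $\mathbb{Z}^d$-valued random variables with filtration $\mathcal{F}_n=\sigma(S_0,\dots,S_n)$, such that $S_0=0$ a.s. and $S_1$ is uniformly distributed on the $2d$ nearest neighbours of the origin. For $n\ge1$ let $e_n=\{S_{n-1},S_n\}$ (an undirected edge) and $m_n=\max\{k\ge1: e_{n-l+1}=e_n \text{ for all } 1\le l\le k\}$ (the number of consecutive times the current edge has just been traversed). For $n\ge1$, conditionally on $\mathcal{F}_n$, the walk traverses $e_n$ again (i.e. $S_{n+1}=S_{n-1}$) with probability $\max\{\frac{1+m_n}{2d+m_n}-\delta,0\}$, and otherwise moves to one of the other $2d-1$ nearest neighbours of $S_n$, each equally likely. (In $d=1$: it recrosses $e_n$ with probability $\frac{1+m_n}{2+m_n}-\delta$ and crosses the other edge with probability $\frac{1}{2+m_n}+\delta$.)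 The random variable $\tau=\sup\{n\ge1: S_m\in\{0,S_1\}\ \text{for all } m\le n\}$ is the number of consecutive traversals of the first edge before leaving it. The walk is called diffusive if $\nu=\lim_{n\to\infty}\mathbb{E}[|S_n|^2]/n$ exists in $(0,\infty)$; $\nu$ is the diffusion constant. *)

theory Defs
  imports "HOL-Analysis.Analysis"
begin

text \<open>Model I in dimension d = 1. A finite trajectory (S_0,...,S_n) is represented
  by an int list xs of length n+1 with xs!i = S_i.\<close>

definition edge1 :: "int list \<Rightarrow> nat \<Rightarrow> int set" where
  "edge1 xs k = {xs ! (k - 1), xs ! k}"

text \<open>m_n: number of consecutive most recent traversals of the current edge e_n.\<close>
definition mcount :: "int list \<Rightarrow> nat \<Rightarrow> nat" where
  "mcount xs n = (GREATEST k. 1 \<le> k \<and> k \<le> n \<and>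
       (\<forall>l\<in>{1..k}. edge1 xs (n - l + 1) = edge1 xs n))"

definition recross_prob :: "real \<Rightarrow> nat \<Rightarrow> real" where
  "recross_prob \<delta> m = max ((1 + real m) / (2 + real m) - \<delta>) 0"

definition trans_prob :: "real \<Rightarrow> int list \<Rightarrow> nat \<Rightarrow> int \<Rightarrow> real" where
  "trans_prob \<delta> xs n x =
     (if \<bar>x - xs ! n\<bar> \<noteq> 1 then 0
      else if n = 0 then 1 / 2
      else if x = xs ! (n - 1) then recross_prob \<delta> (mcount xs n)
      else 1 - recross_prob \<delta> (mcount xs n))"

definition path_prob :: "real \<Rightarrow> int list \<Rightarrow> nat \<Rightarrow> real" where
  "path_prob \<delta> xs n =
     (if xs ! 0 = 0 then 1 else 0) * (\<Prod>k<n. trans_prob \<delta> xs k (xs ! (k + 1)))"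

text \<open>All candidate trajectories of n steps (the walk moves by +-1, so |S_i| <= n).\<close>
definition paths :: "nat \<Rightarrow> int list set" where
  "paths n = {xs. length xs = Suc n \<and> set xs \<subseteq> {- int n .. int n}}"

definition msd :: "real \<Rightarrow> nat \<Rightarrow> real" where
  "msd \<delta> n = (\<Sum>xs\<in>paths n. path_prob \<delta> xs n * (real_of_int (xs ! n))\<^sup>2)"

definition tau_prob :: "real \<Rightarrow> nat \<Rightarrow> real" where
  "tau_prob \<delta> k = (\<Sum>xs\<in>paths (Suc k).
      (if (\<forall>m\<le>k. xs ! m \<in> {0, xs ! 1}) \<and> xs ! (Suc k) \<notin> {0, xs ! 1}
       then path_prob \<delta> xs (Suc k) else 0))"

definition tau_odd :: "real \<Rightarrow> real" where
  "tau_odd \<delta> = (\<Sum>k. if odd k then tau_prob \<delta> k else 0)"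

definition tau_even :: "real \<Rightarrow> real" where
  "tau_even \<delta> = (\<Sum>k. if even k then tau_prob \<delta> k else 0)"

definition tau_mean :: "real \<Rightarrow> real" where
  "tau_mean \<delta> = (\<Sum>k. real k * tau_prob \<delta> k)"

definition diffusion_const :: "real \<Rightarrow> real" where
  "diffusion_const \<delta> = lim (\<lambda>n. msd \<delta> n / real n)"

end

theory Submission
  imports Defs "HOL-Real_Asymp.Real_Asymp"
begin

text \<open>The triple (S_n, S_n - S_{n-1}, m_n) is a Markov chain. From a state with m_n = m the walk
  recrosses its current edge exactly j more times with probability run_prob, a product of
  recrossing probabilities; this gives the law of \<tau> and expresses P(\<tau> odd), P(\<tau> even) and
  E \<tau> as series in these products. Adding to S_n a bounded function h(m_n) of the current run
  length, with the sign of the last step, gives a martingale M_n. Its quadratic variation per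
  step is a bounded function of m_n, which a bounded solution of the Poisson equation replaces by
  the constant \<nu>; hence E[M_n^2] = \<nu> n + O(1) and, since |S_n - M_n| is bounded,
  E[S_n^2] = \<nu> n + O(\<surd>n). Evaluating the correctors at m = 1 gives
  \<nu> = P(\<tau> odd) / (P(\<tau> even) E \<tau>). For small \<delta> the run products behave like
  2 (1 - \<delta>)^j / (j + 2), so E \<tau> is of order |log \<delta>| while P(\<tau> odd) and P(\<tau> even) stay
  bounded away from 0.\<close>

section \<open>Markov chain of the walk\<close>

lemma recross_prob_nonneg: "0 \<le> recross_prob \<delta> m"
  by (simp add: recross_prob_def)

lemma recross_prob_le_one: assumes "0 \<le> \<delta>" shows "recross_prob \<delta> m \<le> 1"
proof -
  have "(1 + real m) / (2 + real m) \<le> 1" by simp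
  then show ?thesis using assms unfolding recross_prob_def by linarith
qed

lemma recross_prob_le: assumes "0 < \<delta>" "\<delta> \<le> 1" shows "recross_prob \<delta> m \<le> 1 - \<delta>"
proof -
  have "(1 + real m) / (2 + real m) \<le> 1" by simp
  then show ?thesis using assms unfolding recross_prob_def by linarith
qed

text \<open>A state of the chain is (s, e, m) = (S_n, S_n - S_{n-1}, m_n), and functions of the state
  are curried. Only states with e = \<plusminus>1 and m \<ge> 1 occur.\<close>

definition reachable_state :: "int \<Rightarrow> nat \<Rightarrow> bool" where
  "reachable_state e m \<longleftrightarrow> (e = 1 \<or> e = -1) \<and> 1 \<le> m"

definition step_op :: "real \<Rightarrow> (int \<Rightarrow> int \<Rightarrow> nat \<Rightarrow> real) \<Rightarrow> int \<Rightarrow> int \<Rightarrow> nat \<Rightarrow> real" where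
  "step_op \<delta> F = (\<lambda>s e m. recross_prob \<delta> m * F (s - e) (- e) (Suc m)
                          + (1 - recross_prob \<delta> m) * F (s + e) e 1)"

text \<open>chain_exp \<delta> n F is the expectation of F at time n + 1; the state at time 1 is
  (\<plusminus>1, \<plusminus>1, 1) with probability 1/2 each.\<close>

definition chain_exp :: "real \<Rightarrow> nat \<Rightarrow> (int \<Rightarrow> int \<Rightarrow> nat \<Rightarrow> real) \<Rightarrow> real" where
  "chain_exp \<delta> n F = ((step_op \<delta> ^^ n) F 1 1 1 + (step_op \<delta> ^^ n) F (-1) (-1) 1) / 2"

lemma funpow_step_op_linear:
  "(step_op \<delta> ^^ n) (\<lambda>s e m. a * F s e m + b * G s e m)
     = (\<lambda>s e m. a * (step_op \<delta> ^^ n) F s e m + b * (step_op \<delta> ^^ n) G s e m)"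
proof (induction n arbitrary: F G)
  case (Suc n)
  have "step_op \<delta> (\<lambda>s e m. a * F s e m + b * G s e m)
          = (\<lambda>s e m. a * step_op \<delta> F s e m + b * step_op \<delta> G s e m)" for F G
    by (intro ext) (simp add: step_op_def algebra_simps)
  then show ?case by (simp only: funpow_Suc_right comp_def Suc.IH)
qed simp

lemma funpow_step_op_const: "(step_op \<delta> ^^ n) (\<lambda>s e m. c) = (\<lambda>s e m. c)"
proof (induction n)
  case (Suc n)
  have "step_op \<delta> (\<lambda>s e m. c) = (\<lambda>s e m. c)"
    by (intro ext) (simp add: step_op_def algebra_simps)
  then show ?case by (simp only: funpow_Suc_right comp_def Suc.IH)
qed simp

lemma chain_exp_linear:
  "chain_exp \<delta> n (\<lambda>s e m. a * F s e m + b * G s e m) = a * chain_exp \<delta> n F + b * chain_exp \<delta> n G"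
  by (simp add: chain_exp_def funpow_step_op_linear field_simps)

lemma chain_exp_const: "chain_exp \<delta> n (\<lambda>s e m. c) = c"
  by (simp add: chain_exp_def funpow_step_op_const)

lemma chain_exp_Suc: "chain_exp \<delta> (Suc n) F = chain_exp \<delta> n (step_op \<delta> F)"
  unfolding chain_exp_def funpow_Suc_right comp_def ..

lemma chain_exp_add:
  "chain_exp \<delta> n (\<lambda>s e m. F s e m + G s e m) = chain_exp \<delta> n F + chain_exp \<delta> n G"
  using chain_exp_linear[of \<delta> n 1 F 1 G] by simp

lemma chain_exp_diff:
  "chain_exp \<delta> n (\<lambda>s e m. F s e m - G s e m) = chain_exp \<delta> n F - chain_exp \<delta> n G"
  using chain_exp_linear[of \<delta> n 1 F "-1" G] by simp

lemma chain_exp_cmult: "chain_exp \<delta> n (\<lambda>s e m. a * F s e m) = a * chain_exp \<delta> n F"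
  using chain_exp_linear[of \<delta> n a F 0 F] by simp

lemma chain_exp_add_const: "chain_exp \<delta> n (\<lambda>s e m. F s e m + c) = chain_exp \<delta> n F + c"
  using chain_exp_add[of \<delta> n F "\<lambda>s e m. c"] chain_exp_const by simp

lemma funpow_step_op_mono:
  assumes "0 < \<delta>" and "\<And>s e m. reachable_state e m \<Longrightarrow> F s e m \<le> G s e m"
    and "reachable_state e m"
  shows "(step_op \<delta> ^^ n) F s e m \<le> (step_op \<delta> ^^ n) G s e m"
  using assms(2,3)
proof (induction n arbitrary: F G s e m)
  case (Suc n)
  have "step_op \<delta> F s e m \<le> step_op \<delta> G s e m" if "reachable_state e m" for s e m
  proof -
    have "reachable_state (-e) (Suc m)" "reachable_state e 1"
      using that by (auto simp: reachable_state_def)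
    moreover have "0 \<le> recross_prob \<delta> m" "0 \<le> 1 - recross_prob \<delta> m"
      using recross_prob_nonneg recross_prob_le_one assms(1) by (auto simp: less_imp_le)
    ultimately show ?thesis
      unfolding step_op_def using Suc.prems(1) by (intro add_mono mult_left_mono) auto
  qed
  from Suc.IH[OF this Suc.prems(2)] show ?case
    unfolding funpow_Suc_right comp_def .
qed simp

lemma chain_exp_mono:
  assumes "0 < \<delta>" and "\<And>s e m. reachable_state e m \<Longrightarrow> F s e m \<le> G s e m"
  shows "chain_exp \<delta> n F \<le> chain_exp \<delta> n G"
  unfolding chain_exp_def
  by (intro divide_right_mono add_mono funpow_step_op_mono[OF assms])
     (auto simp: reachable_state_def)

lemma chain_exp_cong:
  assumes "0 < \<delta>" and "\<And>s e m. reachable_state e m \<Longrightarrow> F s e m = G s e m"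
  shows "chain_exp \<delta> n F = chain_exp \<delta> n G"
  using chain_exp_mono[OF assms(1), of F G n] chain_exp_mono[OF assms(1), of G F n] assms(2)
  by force

lemma chain_exp_abs_squared_le:
  assumes "0 < \<delta>"
  shows "(chain_exp \<delta> n (\<lambda>s e m. \<bar>F s e m\<bar>))\<^sup>2 \<le> chain_exp \<delta> n (\<lambda>s e m. (F s e m)\<^sup>2)"
proof -
  define a where "a = chain_exp \<delta> n (\<lambda>s e m. \<bar>F s e m\<bar>)"
  have "0 \<le> chain_exp \<delta> n (\<lambda>s e m. (\<bar>F s e m\<bar> - a)\<^sup>2)"
    using chain_exp_mono[OF assms, of "\<lambda>s e m. 0" _ n] by (simp add: chain_exp_const)
  also have "(\<lambda>s e m. (\<bar>F s e m\<bar> - a)\<^sup>2) = (\<lambda>s e m. 1 * (F s e m)\<^sup>2 + (-2 * a) * \<bar>F s e m\<bar> + a\<^sup>2)"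
    by (intro ext) (simp add: power2_eq_square algebra_simps)
  also have "chain_exp \<delta> n \<dots> = chain_exp \<delta> n (\<lambda>s e m. (F s e m)\<^sup>2) - a\<^sup>2"
    unfolding chain_exp_add_const chain_exp_linear a_def by (simp add: power2_eq_square)
  finally show ?thesis by (simp add: a_def)
qed

section \<open>The run counter m_n\<close>

definition edge_run :: "int list \<Rightarrow> nat \<Rightarrow> nat \<Rightarrow> bool" where
  "edge_run xs n k \<longleftrightarrow> 1 \<le> k \<and> k \<le> n \<and> (\<forall>l\<in>{1..k}. edge1 xs (n - l + 1) = edge1 xs n)"

lemma mcount_eq_Greatest: "mcount xs n = Greatest (edge_run xs n)"
  unfolding mcount_def edge_run_def ..

lemma edge_run_mcount:
  assumes "1 \<le> n"
  shows "edge_run xs n (mcount xs n)"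
  unfolding mcount_eq_Greatest
  by (rule GreatestI_nat[of _ 1 n]) (use assms in \<open>auto simp: edge_run_def\<close>)

lemma edge_run_le_mcount:
  assumes "1 \<le> n" "edge_run xs n k"
  shows "k \<le> mcount xs n"
  unfolding mcount_eq_Greatest
  by (rule Greatest_le_nat[of _ k n]) (use assms in \<open>auto simp: edge_run_def\<close>)

lemma mcount_eqI:
  assumes "edge_run xs n k" "\<And>j. edge_run xs n j \<Longrightarrow> j \<le> k"
  shows "mcount xs n = k"
  unfolding mcount_eq_Greatest using assms by (intro Greatest_equality) auto

lemma mcount_one [simp]: "mcount xs (Suc 0) = 1"
  by (rule mcount_eqI) (auto simp: edge_run_def)

lemma mcount_cong:
  assumes "\<And>i. i \<le> n \<Longrightarrow> xs ! i = ys ! i"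
  shows "mcount xs n = mcount ys n"
proof -
  have same_edge: "edge1 xs i = edge1 ys i" if "i \<le> n" for i
    using assms that by (simp add: edge1_def)
  have "(\<forall>l\<in>{1..k}. edge1 xs (n - l + 1) = edge1 xs n) \<longleftrightarrow>
        (\<forall>l\<in>{1..k}. edge1 ys (n - l + 1) = edge1 ys n)" if "k \<le> n" for k
    using same_edge that by (intro ball_cong) auto
  then have "edge_run xs n = edge_run ys n"
    by (intro ext) (auto simp: edge_run_def)
  then show ?thesis by (simp add: mcount_eq_Greatest)
qed

lemma ball_atLeastAtMost_Suc_shift:
  "(\<forall>l\<in>{1..Suc k}. P l) \<longleftrightarrow> P 1 \<and> (\<forall>l\<in>{1..k}. P (Suc l))"
proof -
  have "{1..Suc k} = insert 1 (Suc ` {1..k})"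
    by (simp add: atLeastAtMost_insertL)
  then show ?thesis by (simp del: image_Suc_atLeastAtMost)
qed

lemma mcount_Suc_recross:
  assumes "1 \<le> N" "xs ! Suc N = xs ! (N - 1)"
  shows "mcount xs (Suc N) = Suc (mcount xs N)"
proof -
  have same_edge: "edge1 xs (Suc N) = edge1 xs N"
    using assms(2) by (auto simp: edge1_def)
  have shift: "edge_run xs (Suc N) (Suc k) \<longleftrightarrow> edge_run xs N k" if "1 \<le> k" for k
  proof -
    have "(\<forall>l\<in>{1..Suc k}. edge1 xs (Suc N - l + 1) = edge1 xs (Suc N)) \<longleftrightarrow>
          (\<forall>l\<in>{1..k}. edge1 xs (N - l + 1) = edge1 xs N)"
      unfolding ball_atLeastAtMost_Suc_shift by (simp add: same_edge)
    then show ?thesis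
      using that by (simp add: edge_run_def)
  qed
  show ?thesis
  proof (rule mcount_eqI)
    show "edge_run xs (Suc N) (Suc (mcount xs N))"
    proof -
      have "edge_run xs N (mcount xs N)" by (rule edge_run_mcount[OF assms(1)])
      moreover from this have "1 \<le> mcount xs N" by (simp add: edge_run_def)
      ultimately show ?thesis using shift by blast
    qed
  next
    fix j assume j: "edge_run xs (Suc N) j"
    show "j \<le> Suc (mcount xs N)"
    proof (cases "j \<le> 1")
      case False
      then obtain k where "j = Suc k" "1 \<le> k" by (cases j) auto
      with j shift edge_run_le_mcount[OF assms(1), of xs] show ?thesis by force
    qed simp
  qed
qed

lemma mcount_Suc_cross:
  assumes "1 \<le> N" "xs ! Suc N \<noteq> xs ! (N - 1)" "xs ! Suc N \<noteq> xs ! N"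
  shows "mcount xs (Suc N) = 1"
proof (rule mcount_eqI)
  show "edge_run xs (Suc N) 1" by (simp add: edge_run_def)
next
  fix j assume j: "edge_run xs (Suc N) j"
  show "j \<le> 1"
  proof (rule ccontr)
    assume "\<not> j \<le> 1"
    then have "(2::nat) \<in> {1..j}" by auto
    with j have "edge1 xs (Suc N - 2 + 1) = edge1 xs (Suc N)"
      unfolding edge_run_def by blast
    moreover have "Suc N - 2 + 1 = N" using assms(1) by simp
    ultimately have "edge1 xs N = edge1 xs (Suc N)" by simp
    then show False using assms by (auto simp: edge1_def doubleton_eq_iff)
  qed
qed

definition walk_path :: "int list \<Rightarrow> nat \<Rightarrow> bool" where
  "walk_path xs n \<longleftrightarrow> xs ! 0 = 0 \<and> (\<forall>k<n. \<bar>xs ! Suc k - xs ! k\<bar> = 1)"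

lemma mcount_Suc:
  assumes "walk_path xs (Suc N)" "1 \<le> N"
  shows "mcount xs (Suc N) = (if xs ! Suc N = xs ! (N - 1) then Suc (mcount xs N) else 1)"
  using mcount_Suc_recross[OF assms(2)] mcount_Suc_cross[OF assms(2)] assms(1)
  by (fastforce simp: walk_path_def)

section \<open>Path sums as expectations of the chain\<close>

lemma trans_prob_cong:
  assumes "\<And>i. i \<le> k \<Longrightarrow> xs ! i = ys ! i"
  shows "trans_prob \<delta> xs k x = trans_prob \<delta> ys k x"
proof -
  have "mcount xs k = mcount ys k" by (rule mcount_cong) (use assms in auto)
  then show ?thesis using assms[of k] assms[of "k - 1"] by (simp add: trans_prob_def)
qed

lemma path_prob_cong:
  assumes "\<And>i. i \<le> n \<Longrightarrow> xs ! i = ys ! i"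
  shows "path_prob \<delta> xs n = path_prob \<delta> ys n"
proof -
  have "trans_prob \<delta> xs k (xs ! (k + 1)) = trans_prob \<delta> ys k (ys ! (k + 1))" if "k < n" for k
    using trans_prob_cong[of k xs ys] assms that by simp
  then show ?thesis using assms[of 0] by (simp add: path_prob_def)
qed

lemma walk_path_if_path_prob_nonzero:
  assumes "path_prob \<delta> xs n \<noteq> 0"
  shows "walk_path xs n"
proof -
  have "trans_prob \<delta> xs k (xs ! (k + 1)) \<noteq> 0" if "k < n" for k
    using assms that by (auto simp: path_prob_def)
  then show ?thesis
    using assms by (fastforce simp: walk_path_def path_prob_def trans_prob_def split: if_splits)
qed

lemma walk_path_abs_le:
  assumes "walk_path xs n" "i \<le> n"
  shows "\<bar>xs ! i\<bar> \<le> int i"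
  using assms(2)
proof (induction i)
  case (Suc i)
  then have "\<bar>xs ! Suc i - xs ! i\<bar> = 1" using assms(1) by (simp add: walk_path_def)
  with Suc show ?case by auto
qed (use assms(1) in \<open>simp add: walk_path_def\<close>)

lemma path_prob_snoc:
  assumes "length xs = Suc n"
  shows "path_prob \<delta> (xs @ [x]) (Suc n) = path_prob \<delta> xs n * trans_prob \<delta> xs n x"
proof -
  have prefix: "(xs @ [x]) ! i = xs ! i" if "i \<le> n" for i
    using that assms by (simp add: nth_append)
  have "path_prob \<delta> (xs @ [x]) n = path_prob \<delta> xs n"
    by (rule path_prob_cong) (use prefix in auto)
  moreover have "trans_prob \<delta> (xs @ [x]) n x = trans_prob \<delta> xs n x"
    by (rule trans_prob_cong) (use prefix in auto)
  moreover have "(xs @ [x]) ! Suc n = x" using assms by (simp add: nth_append)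
  ultimately show ?thesis by (simp add: path_prob_def mult.assoc)
qed

lemma finite_paths: "finite (paths n)"
proof -
  have "paths n = {xs. set xs \<subseteq> {- int n .. int n} \<and> length xs = Suc n}"
    by (auto simp: paths_def)
  then show ?thesis using finite_lists_length_eq[of "{- int n .. int n}" "Suc n"] by simp
qed

lemma paths_0: "paths 0 = {[0]}"
  by (auto simp: paths_def length_Suc_conv)

lemma snoc_mem_paths_Suc:
  assumes "ys \<in> paths (Suc n)" "path_prob \<delta> ys (Suc n) \<noteq> 0"
  shows "butlast ys \<in> paths n" "ys = butlast ys @ [last ys]" "\<bar>last ys\<bar> \<le> int (Suc n)"
proof -
  have walk: "walk_path ys (Suc n)" by (rule walk_path_if_path_prob_nonzero[OF assms(2)])
  have len: "length ys = Suc (Suc n)" using assms(1) by (simp add: paths_def)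
  then show "ys = butlast ys @ [last ys]" by (intro append_butlast_last_id[symmetric]) auto
  have "\<bar>butlast ys ! i\<bar> \<le> int n" if "i < Suc n" for i
    using walk_path_abs_le[OF walk, of i] that len by (simp add: nth_butlast)
  then show "butlast ys \<in> paths n"
    using len by (fastforce simp: paths_def in_set_conv_nth abs_le_iff)
  have "last ys = ys ! Suc n"
    using len by (cases ys rule: rev_cases) (auto simp: nth_append)
  then show "\<bar>last ys\<bar> \<le> int (Suc n)"
    using walk_path_abs_le[OF walk, of "Suc n"] by simp
qed

lemma sum_paths_Suc_snoc:
  "(\<Sum>ys\<in>paths (Suc n). path_prob \<delta> ys (Suc n) * G ys) =
   (\<Sum>xs\<in>paths n. \<Sum>x\<in>{- int (Suc n) .. int (Suc n)}. path_prob \<delta> (xs @ [x]) (Suc n) * G (xs @ [x]))"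
proof -
  define B where "B = {- int (Suc n) .. int (Suc n)}"
  define extend where "extend = (\<lambda>(xs::int list, x::int). xs @ [x])"
  have inj: "inj_on extend (paths n \<times> B)"
    by (auto simp: inj_on_def extend_def)
  have "(\<Sum>ys\<in>paths (Suc n). path_prob \<delta> ys (Suc n) * G ys) =
        (\<Sum>ys\<in>extend ` (paths n \<times> B). path_prob \<delta> ys (Suc n) * G ys)"
  proof (rule sum.mono_neutral_cong_right)
    show "extend ` (paths n \<times> B) \<subseteq> paths (Suc n)"
      by (auto simp: extend_def paths_def B_def)
    show "\<forall>ys\<in>paths (Suc n) - extend ` (paths n \<times> B). path_prob \<delta> ys (Suc n) * G ys = 0"
    proof (rule ballI, rule ccontr)
      fix ys assume ys: "ys \<in> paths (Suc n) - extend ` (paths n \<times> B)"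
        and "path_prob \<delta> ys (Suc n) * G ys \<noteq> 0"
      then have "path_prob \<delta> ys (Suc n) \<noteq> 0" by auto
      from snoc_mem_paths_Suc[OF _ this] ys have "ys \<in> extend ` (paths n \<times> B)"
        by (force simp: extend_def B_def image_iff abs_le_iff)
      with ys show False by blast
    qed
  qed (auto simp: finite_paths)
  also have "\<dots> = (\<Sum>p\<in>paths n \<times> B. path_prob \<delta> (extend p) (Suc n) * G (extend p))"
    by (rule sum.reindex[OF inj, unfolded comp_def])
  also have "\<dots> = (\<Sum>xs\<in>paths n. \<Sum>x\<in>B. path_prob \<delta> (extend (xs, x)) (Suc n) * G (extend (xs, x)))"
    by (rule sum.cartesian_product')
  finally show ?thesis by (simp add: extend_def B_def)
qed

lemma sum_paths_Suc:
  "(\<Sum>ys\<in>paths (Suc n). path_prob \<delta> ys (Suc n) * G ys) =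
   (\<Sum>xs\<in>paths n. path_prob \<delta> xs n *
      (\<Sum>x\<in>{xs ! n - 1, xs ! n + 1}. trans_prob \<delta> xs n x * G (xs @ [x])))"
  unfolding sum_paths_Suc_snoc
proof (rule sum.cong[OF refl])
  fix xs assume "xs \<in> paths n"
  then have len: "length xs = Suc n" by (simp add: paths_def)
  show "(\<Sum>x\<in>{- int (Suc n) .. int (Suc n)}. path_prob \<delta> (xs @ [x]) (Suc n) * G (xs @ [x])) =
        path_prob \<delta> xs n * (\<Sum>x\<in>{xs ! n - 1, xs ! n + 1}. trans_prob \<delta> xs n x * G (xs @ [x]))"
  proof (cases "path_prob \<delta> xs n = 0")
    case False
    then have "\<bar>xs ! n\<bar> \<le> int n"
      using walk_path_abs_le[OF walk_path_if_path_prob_nonzero] by blast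
    then have "{xs ! n - 1, xs ! n + 1} \<subseteq> {- int (Suc n) .. int (Suc n)}" by auto
    moreover have "path_prob \<delta> (xs @ [x]) (Suc n) = 0" if "x \<notin> {xs ! n - 1, xs ! n + 1}" for x
      using that by (auto simp: path_prob_snoc[OF len] trans_prob_def)
    ultimately have
      "(\<Sum>x\<in>{- int (Suc n) .. int (Suc n)}. path_prob \<delta> (xs @ [x]) (Suc n) * G (xs @ [x])) =
                     (\<Sum>x\<in>{xs ! n - 1, xs ! n + 1}. path_prob \<delta> (xs @ [x]) (Suc n) * G (xs @ [x]))"
      by (intro sum.mono_neutral_cong_right) auto
    then show ?thesis
      by (simp add: path_prob_snoc[OF len] algebra_simps)
  qed (simp add: path_prob_snoc[OF len])
qed

lemma sum_neighbours: "(\<Sum>x\<in>{y - 1, y + 1}. f x) = f (y - 1) + f (y + 1)" for y :: int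
  by simp

definition state_value :: "(int \<Rightarrow> int \<Rightarrow> nat \<Rightarrow> real) \<Rightarrow> int list \<Rightarrow> nat \<Rightarrow> real" where
  "state_value F xs n = F (xs ! n) (xs ! n - xs ! (n - 1)) (mcount xs n)"

lemma state_value_snoc:
  assumes len: "length xs = Suc (Suc n)" and walk: "walk_path xs (Suc n)"
    and step: "\<bar>x - xs ! Suc n\<bar> = 1"
  shows "state_value F (xs @ [x]) (Suc (Suc n)) =
           F x (x - xs ! Suc n) (if x = xs ! n then Suc (mcount xs (Suc n)) else 1)"
proof -
  have prefix: "(xs @ [x]) ! i = xs ! i" if "i \<le> Suc n" for i
    using that len by (simp add: nth_append)
  have last: "(xs @ [x]) ! Suc (Suc n) = x"
    using len by (simp add: nth_append)
  have "walk_path (xs @ [x]) (Suc (Suc n))"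
    using walk step prefix last by (auto simp: walk_path_def less_Suc_eq)
  then have "mcount (xs @ [x]) (Suc (Suc n)) =
               (if x = xs ! n then Suc (mcount (xs @ [x]) (Suc n)) else 1)"
    using mcount_Suc[of "xs @ [x]" "Suc n"] prefix[of n] last by simp
  moreover have "mcount (xs @ [x]) (Suc n) = mcount xs (Suc n)"
    by (rule mcount_cong) (use prefix in auto)
  moreover have "(xs @ [x]) ! Suc n = xs ! Suc n" by (rule prefix) simp
  ultimately show ?thesis
    unfolding state_value_def diff_Suc_1 last by presburger
qed

lemma sum_trans_prob_state_value:
  assumes len: "length xs = Suc (Suc n)" and walk: "walk_path xs (Suc n)"
  shows "(\<Sum>x\<in>{xs ! Suc n - 1, xs ! Suc n + 1}.
            trans_prob \<delta> xs (Suc n) x * state_value F (xs @ [x]) (Suc (Suc n)))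
         = state_value (step_op \<delta> F) xs (Suc n)"
proof -
  note down = state_value_snoc[OF len walk, of "xs ! Suc n - 1", simplified]
  note up = state_value_snoc[OF len walk, of "xs ! Suc n + 1", simplified]
  have "\<bar>xs ! Suc n - xs ! n\<bar> = 1" using walk by (simp add: walk_path_def)
  then consider "xs ! n = xs ! Suc n - 1" | "xs ! Suc n = xs ! n - 1" by linarith
  then show ?thesis
    unfolding sum_neighbours down up
    by cases (simp_all add: trans_prob_def state_value_def step_op_def)
qed

lemma sum_paths_state_value:
  "(\<Sum>xs\<in>paths (Suc n). path_prob \<delta> xs (Suc n) * state_value F xs (Suc n)) = chain_exp \<delta> n F"
proof (induction n arbitrary: F)
  case 0
  show ?case
    unfolding sum_paths_Suc
    by (simp add: paths_0 path_prob_def trans_prob_def state_value_def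
        chain_exp_def field_simps)
next
  case (Suc n)
  have "(\<Sum>xs\<in>paths (Suc (Suc n)). path_prob \<delta> xs (Suc (Suc n)) * state_value F xs (Suc (Suc n)))
      = (\<Sum>xs\<in>paths (Suc n). path_prob \<delta> xs (Suc n) * state_value (step_op \<delta> F) xs (Suc n))"
    unfolding sum_paths_Suc[of \<delta> "Suc n"]
  proof (rule sum.cong[OF refl])
    fix xs assume "xs \<in> paths (Suc n)"
    then have len: "length xs = Suc (Suc n)" by (simp add: paths_def)
    show "path_prob \<delta> xs (Suc n) * (\<Sum>x\<in>{xs ! Suc n - 1, xs ! Suc n + 1}.
            trans_prob \<delta> xs (Suc n) x * state_value F (xs @ [x]) (Suc (Suc n)))
          = path_prob \<delta> xs (Suc n) * state_value (step_op \<delta> F) xs (Suc n)"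
      using sum_trans_prob_state_value[OF len walk_path_if_path_prob_nonzero] by force
  qed
  also have "\<dots> = chain_exp \<delta> (Suc n) F" by (simp add: Suc.IH chain_exp_Suc)
  finally show ?case .
qed

lemma msd_Suc: "msd \<delta> (Suc n) = chain_exp \<delta> n (\<lambda>s e m. (real_of_int s)\<^sup>2)"
  using sum_paths_state_value[of \<delta> n "\<lambda>s e m. (real_of_int s)\<^sup>2"]
  by (simp add: msd_def state_value_def)

lemma first_edge_endpoints:
  fixes xs :: "int list"
  assumes "\<forall>m\<le>Suc j. xs ! m \<in> {0, xs ! 1}" "\<bar>xs ! Suc j - xs ! j\<bar> = 1"
  shows "{xs ! j, xs ! Suc j} = {0, xs ! 1}"
proof -
  have "xs ! j \<in> {0, xs ! 1}" "xs ! Suc j \<in> {0, xs ! 1}"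
    using assms(1) by auto
  moreover have "xs ! j \<noteq> xs ! Suc j"
    using assms(2) by auto
  ultimately show ?thesis by auto
qed

lemma first_edge_iff_mcount:
  fixes xs :: "int list"
  assumes walk: "walk_path xs K"
  shows "Suc j \<le> K \<Longrightarrow> (\<forall>m\<le>Suc j. xs ! m \<in> {0, xs ! 1}) \<longleftrightarrow> mcount xs (Suc j) = Suc j"
proof (induction j)
  case 0
  have "xs ! 0 = 0" using walk by (simp add: walk_path_def)
  then show ?case by (auto simp: le_Suc_eq)
next
  case (Suc j)
  have step: "\<bar>xs ! Suc (Suc j) - xs ! Suc j\<bar> = 1" "\<bar>xs ! Suc j - xs ! j\<bar> = 1"
    using walk Suc.prems by (auto simp: walk_path_def)
  have "walk_path xs (Suc (Suc j))"
    using walk Suc.prems by (simp add: walk_path_def)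
  then have mc: "mcount xs (Suc (Suc j)) =
                   (if xs ! Suc (Suc j) = xs ! j then Suc (mcount xs (Suc j)) else 1)"
    using mcount_Suc[of xs "Suc j"] by simp
  have IH: "(\<forall>m\<le>Suc j. xs ! m \<in> {0, xs ! 1}) \<longleftrightarrow> mcount xs (Suc j) = Suc j"
    using Suc by simp
  have split: "(\<forall>m\<le>Suc (Suc j). xs ! m \<in> {0, xs ! 1}) \<longleftrightarrow>
      (\<forall>m\<le>Suc j. xs ! m \<in> {0, xs ! 1}) \<and> xs ! Suc (Suc j) \<in> {0, xs ! 1}"
    by (auto simp: le_Suc_eq)
  show ?case
  proof (cases "\<forall>m\<le>Suc j. xs ! m \<in> {0, xs ! 1}")
    case True
    then have "{xs ! j, xs ! Suc j} = {0, xs ! 1}"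
      using step(2) by (rule first_edge_endpoints)
    then have "xs ! Suc (Suc j) \<in> {0, xs ! 1} \<longleftrightarrow> xs ! Suc (Suc j) = xs ! j"
      using step(1) by auto
    then show ?thesis using True IH mc split by auto
  qed (use IH mc split in auto)
qed

lemma tau_prob_0: "tau_prob \<delta> 0 = 0"
  by (simp add: tau_prob_def)

lemma tau_prob_Suc_chain_exp:
  "tau_prob \<delta> (Suc j) = chain_exp \<delta> j (\<lambda>s e m. if m = Suc j then 1 - recross_prob \<delta> m else 0)"
proof -
  define leaves where "leaves ys \<longleftrightarrow>
    (\<forall>m\<le>Suc j. ys ! m \<in> {0, ys ! 1}) \<and> ys ! Suc (Suc j) \<notin> {0, ys ! 1}" for ys :: "int list"
  define F :: "int \<Rightarrow> int \<Rightarrow> nat \<Rightarrow> real"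
    where "F = (\<lambda>s e m. if m = Suc j then 1 - recross_prob \<delta> m else 0)"
  have "tau_prob \<delta> (Suc j) =
          (\<Sum>ys\<in>paths (Suc (Suc j)). path_prob \<delta> ys (Suc (Suc j)) * of_bool (leaves ys))"
    unfolding tau_prob_def leaves_def by (intro sum.cong) auto
  also have "\<dots> = (\<Sum>xs\<in>paths (Suc j). path_prob \<delta> xs (Suc j) * state_value F xs (Suc j))"
    unfolding sum_paths_Suc[of \<delta> "Suc j"]
  proof (rule sum.cong[OF refl])
    fix xs assume "xs \<in> paths (Suc j)"
    then have len: "length xs = Suc (Suc j)" by (simp add: paths_def)
    show "path_prob \<delta> xs (Suc j) * (\<Sum>x\<in>{xs ! Suc j - 1, xs ! Suc j + 1}.
            trans_prob \<delta> xs (Suc j) x * of_bool (leaves (xs @ [x])))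
          = path_prob \<delta> xs (Suc j) * state_value F xs (Suc j)"
    proof (cases "path_prob \<delta> xs (Suc j) = 0")
      case False
      then have walk: "walk_path xs (Suc j)" by (rule walk_path_if_path_prob_nonzero)
      have prefix: "(xs @ [x]) ! i = xs ! i" if "i \<le> Suc j" for i x
        using that len by (simp add: nth_append)
      have leaves_snoc: "leaves (xs @ [x]) \<longleftrightarrow>
          (\<forall>m\<le>Suc j. xs ! m \<in> {0, xs ! 1}) \<and> x \<notin> {0, xs ! 1}" for x
        using prefix[of 1 x] prefix[of _ x] len by (simp add: leaves_def nth_append)
      have step: "\<bar>xs ! Suc j - xs ! j\<bar> = 1" using walk by (simp add: walk_path_def)
      show ?thesis
      proof (cases "\<forall>m\<le>Suc j. xs ! m \<in> {0, xs ! 1}")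
        case True
        have mc: "mcount xs (Suc j) = Suc j"
          using True first_edge_iff_mcount[OF walk] by simp
        have "{0, xs ! 1} = {xs ! j, xs ! Suc j}"
          using first_edge_endpoints[OF True step] by simp
        then have leaves_iff: "leaves (xs @ [x]) \<longleftrightarrow> x \<noteq> xs ! j \<and> x \<noteq> xs ! Suc j" for x
          using True by (simp add: leaves_snoc)
        from step consider "xs ! j = xs ! Suc j - 1" | "xs ! j = xs ! Suc j + 1"
          by linarith
        then show ?thesis
          unfolding sum_neighbours
          by cases (simp_all add: mc leaves_iff trans_prob_def state_value_def F_def)
      next
        case False
        then have "mcount xs (Suc j) \<noteq> Suc j"
          using first_edge_iff_mcount[OF walk] by blast
        moreover have "\<not> leaves (xs @ [x])" for x
          using False leaves_snoc by blast
        ultimately show ?thesis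
          by (simp add: sum_neighbours state_value_def F_def)
      qed
    qed simp
  qed
  also have "\<dots> = chain_exp \<delta> j F" by (rule sum_paths_state_value)
  finally show ?thesis unfolding F_def .
qed

section \<open>Runs of recrossings and the law of \<tau>\<close>

text \<open>run_prob \<delta> m j is the probability that a walk whose current edge has just been
  traversed m times in a row recrosses it j more times.\<close>

definition run_prob :: "real \<Rightarrow> nat \<Rightarrow> nat \<Rightarrow> real" where
  "run_prob \<delta> m j = (\<Prod>i<j. recross_prob \<delta> (m + i))"

definition alt_run_sum :: "real \<Rightarrow> nat \<Rightarrow> real" where
  "alt_run_sum \<delta> m = (\<Sum>j. (-1)^j * run_prob \<delta> m j)"

definition run_sum :: "real \<Rightarrow> nat \<Rightarrow> real" where
  "run_sum \<delta> m = (\<Sum>j. run_prob \<delta> m j)"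

lemma run_prob_0[simp]: "run_prob \<delta> m 0 = 1" by (simp add: run_prob_def)

lemma run_prob_Suc: "run_prob \<delta> m (Suc j) = recross_prob \<delta> m * run_prob \<delta> (Suc m) j"
  unfolding run_prob_def prod.lessThan_Suc_shift by simp

lemma run_prob_Suc_right: "run_prob \<delta> m (Suc j) = run_prob \<delta> m j * recross_prob \<delta> (m + j)"
  unfolding run_prob_def by simp

lemma run_prob_nonneg: "0 \<le> run_prob \<delta> m j"
  unfolding run_prob_def by (intro prod_nonneg) (simp add: recross_prob_nonneg)

lemma run_prob_le: assumes "0 < \<delta>" "\<delta> \<le> 1" shows "run_prob \<delta> m j \<le> (1 - \<delta>) ^ j"
proof (induction j)
  case (Suc j)
  have "run_prob \<delta> m (Suc j) = run_prob \<delta> m j * recross_prob \<delta> (m + j)" by (rule run_prob_Suc_right)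
  also have "\<dots> \<le> (1 - \<delta>) ^ j * (1 - \<delta>)"
    by (intro mult_mono Suc recross_prob_le assms run_prob_nonneg)
       (use assms recross_prob_nonneg in auto)
  finally show ?case by (simp add: mult.commute)
qed simp

lemma chain_exp_mcount_indicator:
  "chain_exp \<delta> j (\<lambda>s e m. if m = Suc j then f m else 0) = run_prob \<delta> 1 j * f (Suc j)"
proof (induction j arbitrary: f)
  case 0
  then show ?case by (simp add: chain_exp_def)
next
  case (Suc j)
  have "step_op \<delta> (\<lambda>s e m. if m = Suc (Suc j) then f m else 0) =
        (\<lambda>s e m. if m = Suc j then recross_prob \<delta> m * f (Suc m) else 0)"
    by (intro ext) (simp add: step_op_def)
  then have "chain_exp \<delta> (Suc j) (\<lambda>s e m. if m = Suc (Suc j) then f m else 0) =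
     run_prob \<delta> 1 j * (recross_prob \<delta> (Suc j) * f (Suc (Suc j)))"
    by (simp add: chain_exp_Suc Suc.IH)
  then show ?case by (simp add: run_prob_Suc_right)
qed

lemma tau_prob_Suc_diff: "tau_prob \<delta> (Suc j) = run_prob \<delta> 1 j - run_prob \<delta> 1 (Suc j)"
  by (simp add: tau_prob_Suc_chain_exp chain_exp_mcount_indicator run_prob_Suc_right algebra_simps)

lemma tau_prob_Suc: "tau_prob \<delta> (Suc j) = run_prob \<delta> 1 j * (1 - recross_prob \<delta> (Suc j))"
  by (simp add: tau_prob_Suc_chain_exp chain_exp_mcount_indicator)

lemma tau_prob_1: "tau_prob \<delta> 1 = 1 - recross_prob \<delta> 1"
  using tau_prob_Suc[of \<delta> 0] by simp

lemma tau_prob_2: "tau_prob \<delta> 2 = recross_prob \<delta> 1 * (1 - recross_prob \<delta> 2)"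
  using tau_prob_Suc[of \<delta> 1] by (simp add: numeral_2_eq_2 run_prob_Suc_right)

lemma tau_prob_nonneg: "0 \<le> \<delta> \<Longrightarrow> 0 \<le> tau_prob \<delta> k"
  by (cases k) (auto simp: tau_prob_0 tau_prob_Suc run_prob_nonneg recross_prob_le_one)

context
  fixes \<delta> :: real
  assumes \<delta>_pos: "0 < \<delta>" and \<delta>_le_1: "\<delta> \<le> 1"
begin

lemma summable_geometric_one_minus: "summable (\<lambda>j. (1 - \<delta>) ^ j)"
  by (rule summable_geometric) (use \<delta>_pos \<delta>_le_1 in auto)

lemma suminf_geometric_one_minus: "(\<Sum>j. (1 - \<delta>) ^ j) = 1 / \<delta>"
  using suminf_geometric[of "1 - \<delta>"] \<delta>_pos \<delta>_le_1 by simp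

lemma summable_run_prob: "summable (run_prob \<delta> m)"
  by (rule summable_comparison_test'[OF summable_geometric_one_minus, of 0])
     (simp add: run_prob_nonneg run_prob_le[OF \<delta>_pos \<delta>_le_1])

lemma summable_alt_run_prob: "summable (\<lambda>j. (-1)^j * run_prob \<delta> m j)"
  by (rule summable_comparison_test'[OF summable_geometric_one_minus, of 0])
     (simp add: abs_mult run_prob_nonneg run_prob_le[OF \<delta>_pos \<delta>_le_1])

lemma alt_run_sum_rec: "alt_run_sum \<delta> m = 1 - recross_prob \<delta> m * alt_run_sum \<delta> (Suc m)"
proof -
  have "alt_run_sum \<delta> m = (-1)^0 * run_prob \<delta> m 0 + (\<Sum>j. (-1)^(Suc j) * run_prob \<delta> m (Suc j))"
    unfolding alt_run_sum_def using suminf_split_head[OF summable_alt_run_prob, of m] by simp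
  also have "(\<Sum>j. (-1)^(Suc j) * run_prob \<delta> m (Suc j))
               = (\<Sum>j. (- recross_prob \<delta> m) * ((-1)^j * run_prob \<delta> (Suc m) j))"
    by (simp add: run_prob_Suc mult.left_commute)
  also have "\<dots> = - recross_prob \<delta> m * alt_run_sum \<delta> (Suc m)"
    unfolding alt_run_sum_def by (rule suminf_mult[OF summable_alt_run_prob])
  finally show ?thesis by simp
qed

lemma run_sum_rec: "run_sum \<delta> m = 1 + recross_prob \<delta> m * run_sum \<delta> (Suc m)"
proof -
  have "run_sum \<delta> m = run_prob \<delta> m 0 + (\<Sum>j. run_prob \<delta> m (Suc j))"
    unfolding run_sum_def using suminf_split_head[OF summable_run_prob, of m] by simp
  also have "(\<Sum>j. run_prob \<delta> m (Suc j)) = (\<Sum>j. recross_prob \<delta> m * run_prob \<delta> (Suc m) j)"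
    by (simp add: run_prob_Suc)
  also have "\<dots> = recross_prob \<delta> m * run_sum \<delta> (Suc m)"
    unfolding run_sum_def by (rule suminf_mult[OF summable_run_prob])
  finally show ?thesis by simp
qed

lemma run_sum_le: "run_sum \<delta> m \<le> 1 / \<delta>"
proof -
  have "run_sum \<delta> m \<le> (\<Sum>j. (1 - \<delta>) ^ j)"
    unfolding run_sum_def
    by (rule suminf_le[OF _ summable_run_prob summable_geometric_one_minus])
       (simp add: run_prob_le[OF \<delta>_pos \<delta>_le_1])
  then show ?thesis using suminf_geometric_one_minus by simp
qed

lemma run_sum_nonneg: "0 \<le> run_sum \<delta> m"
  unfolding run_sum_def by (rule suminf_nonneg[OF summable_run_prob]) (simp add: run_prob_nonneg)

lemma run_sum_ge_one: "1 \<le> run_sum \<delta> m"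
  using run_sum_rec[of m] run_sum_nonneg[of "Suc m"] recross_prob_nonneg[of \<delta> m] by simp

lemma abs_alt_run_sum_le: "\<bar>alt_run_sum \<delta> m\<bar> \<le> 1 / \<delta>"
proof -
  have s: "summable (\<lambda>j. \<bar>(-1)^j * run_prob \<delta> m j\<bar>)"
    using summable_run_prob[of m] by (simp add: abs_mult run_prob_nonneg)
  have "\<bar>alt_run_sum \<delta> m\<bar> \<le> (\<Sum>j. \<bar>(-1)^j * run_prob \<delta> m j\<bar>)"
    unfolding alt_run_sum_def by (rule summable_rabs[OF s])
  also have "\<dots> = run_sum \<delta> m" by (simp add: run_sum_def abs_mult run_prob_nonneg)
  finally show ?thesis using run_sum_le[of m] by linarith
qed

lemma run_prob_tendsto_0: "run_prob \<delta> m \<longlonglongrightarrow> 0"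
proof (rule Lim_null_comparison[of _ "\<lambda>j. (1 - \<delta>) ^ j"])
  show "\<forall>\<^sub>F j in sequentially. norm (run_prob \<delta> m j) \<le> (1 - \<delta>) ^ j"
    by (simp add: run_prob_nonneg run_prob_le[OF \<delta>_pos \<delta>_le_1])
  show "(\<lambda>j. (1 - \<delta>) ^ j) \<longlonglongrightarrow> 0"
    by (rule LIMSEQ_power_zero) (use \<delta>_pos \<delta>_le_1 in auto)
qed

lemma tau_prob_sums: "tau_prob \<delta> sums 1"
proof -
  have "(\<lambda>j. run_prob \<delta> 1 j - run_prob \<delta> 1 (Suc j)) sums (run_prob \<delta> 1 0 - 0)"
    by (rule telescope_sums'[OF run_prob_tendsto_0])
  then have "(\<lambda>j. tau_prob \<delta> (Suc j)) sums 1" by (simp add: tau_prob_Suc_diff)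
  then show ?thesis by (simp add: sums_Suc_iff tau_prob_0)
qed

text \<open>P(\<tau> = j + 1) = run_prob \<delta> 1 j - run_prob \<delta> 1 (j + 1), so the signed series
  telescopes in pairs to 2 alt_run_sum \<delta> 1 - 1; odd and even parts are half its sum and
  difference with the total mass 1.\<close>

lemma signed_tau_prob_sums:
  "(\<lambda>k. (-1)^(Suc k) * tau_prob \<delta> k) sums (2 * alt_run_sum \<delta> 1 - 1)"
proof -
  define f where "f = (\<lambda>j. (-1)^j * run_prob \<delta> 1 j)"
  have f: "f sums alt_run_sum \<delta> 1"
    unfolding f_def alt_run_sum_def by (rule summable_sums[OF summable_alt_run_prob])
  then have "f sums (alt_run_sum \<delta> 1 - 1 + f 0)"
    by (simp add: f_def)
  then have "(\<lambda>j. f (Suc j)) sums (alt_run_sum \<delta> 1 - 1)"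
    by (simp only: sums_Suc_iff)
  from sums_add[OF f this] have "(\<lambda>j. f j + f (Suc j)) sums (2 * alt_run_sum \<delta> 1 - 1)"
    by simp
  moreover have "(\<lambda>j. f j + f (Suc j)) = (\<lambda>j. (-1)^(Suc (Suc j)) * tau_prob \<delta> (Suc j))"
    by (rule ext) (simp add: f_def tau_prob_Suc_diff algebra_simps)
  ultimately have "(\<lambda>j. (-1)^(Suc (Suc j)) * tau_prob \<delta> (Suc j)) sums (2 * alt_run_sum \<delta> 1 - 1)"
    by simp
  from sums_Suc_iff[of "\<lambda>k. (-1)^(Suc k) * tau_prob \<delta> k", THEN iffD1, OF this]
  show ?thesis by (simp add: tau_prob_0)
qed

lemma odd_tau_prob_sums: "(\<lambda>k. if odd k then tau_prob \<delta> k else 0) sums alt_run_sum \<delta> 1"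
proof -
  have "(\<lambda>k. (tau_prob \<delta> k + (-1)^(Suc k) * tau_prob \<delta> k) / 2)
          sums ((1 + (2 * alt_run_sum \<delta> 1 - 1)) / 2)"
    by (intro sums_divide sums_add tau_prob_sums signed_tau_prob_sums)
  moreover have "(\<lambda>k. (tau_prob \<delta> k + (-1)^(Suc k) * tau_prob \<delta> k) / 2)
                   = (\<lambda>k. if odd k then tau_prob \<delta> k else 0)"
    by (rule ext) auto
  ultimately show ?thesis by simp
qed

lemma even_tau_prob_sums: "(\<lambda>k. if even k then tau_prob \<delta> k else 0) sums (1 - alt_run_sum \<delta> 1)"
proof -
  have "(\<lambda>k. (tau_prob \<delta> k - (-1)^(Suc k) * tau_prob \<delta> k) / 2)
          sums ((1 - (2 * alt_run_sum \<delta> 1 - 1)) / 2)"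
    by (intro sums_divide sums_diff tau_prob_sums signed_tau_prob_sums)
  moreover have "(\<lambda>k. (tau_prob \<delta> k - (-1)^(Suc k) * tau_prob \<delta> k) / 2)
                   = (\<lambda>k. if even k then tau_prob \<delta> k else 0)"
    by (rule ext) auto
  moreover have "(1 - (2 * alt_run_sum \<delta> 1 - 1)) / 2 = 1 - alt_run_sum \<delta> 1"
    by simp
  ultimately show ?thesis by metis
qed

lemma tau_odd_eq: "tau_odd \<delta> = alt_run_sum \<delta> 1"
  unfolding tau_odd_def using odd_tau_prob_sums by (simp add: sums_iff)

lemma tau_even_eq: "tau_even \<delta> = 1 - alt_run_sum \<delta> 1"
  unfolding tau_even_def using even_tau_prob_sums by (simp add: sums_iff)

lemma partial_mean_tau:
  "(\<Sum>k<Suc N. real k * tau_prob \<delta> k) = (\<Sum>j<N. run_prob \<delta> 1 j) - real N * run_prob \<delta> 1 N"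
proof (induction N)
  case 0
  then show ?case by simp
next
  case (Suc N)
  have "(\<Sum>k<Suc (Suc N). real k * tau_prob \<delta> k)
          = (\<Sum>k<Suc N. real k * tau_prob \<delta> k) + real (Suc N) * tau_prob \<delta> (Suc N)"
    by simp
  also have "\<dots> = (\<Sum>j<Suc N. run_prob \<delta> 1 j) - real (Suc N) * run_prob \<delta> 1 (Suc N)"
    using Suc.IH by (simp add: tau_prob_Suc_diff algebra_simps)
  finally show ?case .
qed

lemma mean_tau_sums: "(\<lambda>k. real k * tau_prob \<delta> k) sums run_sum \<delta> 1"
proof -
  have a: "(\<lambda>N. \<Sum>j<N. run_prob \<delta> 1 j) \<longlonglongrightarrow> run_sum \<delta> 1"
    unfolding run_sum_def by (rule summable_LIMSEQ[OF summable_run_prob])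
  have b: "(\<lambda>N. real N * run_prob \<delta> 1 N) \<longlonglongrightarrow> 0"
  proof (rule Lim_null_comparison[of _ "\<lambda>N. real N * (1 - \<delta>) ^ N"])
    show "\<forall>\<^sub>F N in sequentially. norm (real N * run_prob \<delta> 1 N) \<le> real N * (1 - \<delta>) ^ N"
      by (intro always_eventually allI)
         (simp add: run_prob_nonneg run_prob_le[OF \<delta>_pos \<delta>_le_1] mult_left_mono)
    show "(\<lambda>N. real N * (1 - \<delta>) ^ N) \<longlonglongrightarrow> 0"
      by (rule powser_times_n_limit_0) (use \<delta>_pos \<delta>_le_1 in auto)
  qed
  have "(\<lambda>N. (\<Sum>j<N. run_prob \<delta> 1 j) - real N * run_prob \<delta> 1 N) \<longlonglongrightarrow> run_sum \<delta> 1 - 0"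
    by (rule tendsto_diff[OF a b])
  then have "(\<lambda>N. \<Sum>k<Suc N. real k * tau_prob \<delta> k) \<longlonglongrightarrow> run_sum \<delta> 1"
    unfolding partial_mean_tau by simp
  then have "(\<lambda>N. \<Sum>k<N. real k * tau_prob \<delta> k) \<longlonglongrightarrow> run_sum \<delta> 1"
    by (rule LIMSEQ_imp_Suc[of "\<lambda>N. \<Sum>k<N. real k * tau_prob \<delta> k"])
  then show ?thesis by (simp add: sums_def)
qed

lemma tau_mean_eq: "tau_mean \<delta> = run_sum \<delta> 1"
  unfolding tau_mean_def using mean_tau_sums by (simp add: sums_iff)

lemma summable_mean_tau: "summable (\<lambda>k. real k * tau_prob \<delta> k)"
  using mean_tau_sums by (simp add: sums_iff)

lemma tau_prob_1_le_tau_odd: "tau_prob \<delta> 1 \<le> tau_odd \<delta>"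
proof -
  have "sum (\<lambda>k. if odd k then tau_prob \<delta> k else 0) {1} \<le> (\<Sum>k. if odd k then tau_prob \<delta> k else 0)"
    by (rule sum_le_suminf)
       (use odd_tau_prob_sums tau_prob_nonneg[of \<delta>] \<delta>_pos in \<open>auto simp: sums_iff\<close>)
  then show ?thesis by (simp add: tau_odd_def)
qed

lemma tau_prob_2_le_tau_even: "tau_prob \<delta> 2 \<le> tau_even \<delta>"
proof -
  have "sum (\<lambda>k. if even k then tau_prob \<delta> k else 0) {2} \<le> (\<Sum>k. if even k then tau_prob \<delta> k else 0)"
    by (rule sum_le_suminf)
       (use even_tau_prob_sums tau_prob_nonneg[of \<delta>] \<delta>_pos in \<open>auto simp: sums_iff\<close>)
  then show ?thesis by (simp add: tau_even_def)
qed

end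

section \<open>The martingale and the Poisson corrector\<close>

definition harmonic_base :: "real \<Rightarrow> real" where
  "harmonic_base \<delta> = alt_run_sum \<delta> 1 / (2 * (1 - alt_run_sum \<delta> 1))"

definition harmonic_coeff :: "real \<Rightarrow> nat \<Rightarrow> real" where
  "harmonic_coeff \<delta> m = alt_run_sum \<delta> m * (1 + 2 * harmonic_base \<delta>) - harmonic_base \<delta>"

text \<open>With h = harmonic_coeff \<delta>, S_n + (S_n - S_{n-1}) (h m_n - 1) is a martingale. Harmonicity
  at run length m ties h m to h (m + 1) after a recrossing and to h 1 after a crossing; this is
  alt_run_sum_rec once h 1 = harmonic_base \<delta>, and harmonic_base solves that fixed-point
  equation.\<close>

definition martingale :: "real \<Rightarrow> int \<Rightarrow> int \<Rightarrow> nat \<Rightarrow> real" where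
  "martingale \<delta> s e m = real_of_int s + real_of_int e * (harmonic_coeff \<delta> m - 1)"

text \<open>The conditional second moment of a martingale increment from a state (s, \<plusminus>1, m).\<close>

definition increment_var :: "real \<Rightarrow> nat \<Rightarrow> real" where
  "increment_var \<delta> m =
     recross_prob \<delta> m * (harmonic_coeff \<delta> (Suc m) + harmonic_coeff \<delta> m - 1)\<^sup>2
     + (1 - recross_prob \<delta> m) * (harmonic_base \<delta> - harmonic_coeff \<delta> m + 1)\<^sup>2"

text \<open>A closed form of the sum over j of run_prob \<delta> m j * increment_var \<delta> (m + j): the
  quadratic variation expected to accumulate before the walk leaves its current edge.\<close>

definition residual_var :: "real \<Rightarrow> nat \<Rightarrow> real" where
  "residual_var \<delta> m = alt_run_sum \<delta> m * (1 + harmonic_base \<delta> - harmonic_coeff \<delta> m)\<^sup>2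
     + (1 - alt_run_sum \<delta> m) * (harmonic_base \<delta> + harmonic_coeff \<delta> m)\<^sup>2"

definition diffusion_rate :: "real \<Rightarrow> real" where
  "diffusion_rate \<delta> = residual_var \<delta> 1 / run_sum \<delta> 1"

text \<open>A bounded solution of the Poisson equation for increment_var \<delta> - diffusion_rate \<delta>.\<close>

definition poisson_sol :: "real \<Rightarrow> nat \<Rightarrow> real" where
  "poisson_sol \<delta> m = residual_var \<delta> m - diffusion_rate \<delta> * run_sum \<delta> m"

context
  fixes \<delta> :: real
  assumes \<delta>_pos: "0 < \<delta>" and \<delta>_le_1: "\<delta> \<le> 1"
begin

lemma harmonic_coeff_rec:
  "harmonic_coeff \<delta> m = 1 + (1 - recross_prob \<delta> m) * harmonic_base \<delta>
                           - recross_prob \<delta> m * harmonic_coeff \<delta> (Suc m)"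
  unfolding harmonic_coeff_def by (subst alt_run_sum_rec[OF \<delta>_pos \<delta>_le_1]) (simp add: algebra_simps)

lemma residual_var_rec:
  "residual_var \<delta> m = increment_var \<delta> m + recross_prob \<delta> m * residual_var \<delta> (Suc m)"
proof -
  define r where "r = recross_prob \<delta> m"
  define A where "A = alt_run_sum \<delta> (Suc m)"
  define g where "g = harmonic_base \<delta>"
  have "alt_run_sum \<delta> m = 1 - r * A"
    unfolding r_def A_def by (rule alt_run_sum_rec[OF \<delta>_pos \<delta>_le_1])
  then have lhs: "residual_var \<delta> m =
      (1 - r * A) * (1 + g - ((1 - r * A) * (1 + 2 * g) - g))\<^sup>2
      + (1 - (1 - r * A)) * (g + ((1 - r * A) * (1 + 2 * g) - g))\<^sup>2"
    unfolding residual_var_def harmonic_coeff_def g_def by simp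
  have rhs: "increment_var \<delta> m + recross_prob \<delta> m * residual_var \<delta> (Suc m) =
      r * ((A * (1 + 2 * g) - g) + ((1 - r * A) * (1 + 2 * g) - g) - 1)\<^sup>2
      + (1 - r) * (g - ((1 - r * A) * (1 + 2 * g) - g) + 1)\<^sup>2
      + r * (A * (1 + g - (A * (1 + 2 * g) - g))\<^sup>2 + (1 - A) * (g + (A * (1 + 2 * g) - g))\<^sup>2)"
    unfolding residual_var_def increment_var_def harmonic_coeff_def r_def A_def g_def
    using \<open>alt_run_sum \<delta> m = 1 - r * A\<close> by (simp add: r_def A_def)
  have "(1 - r * A) * (1 + g - ((1 - r * A) * (1 + 2 * g) - g))\<^sup>2
      + (1 - (1 - r * A)) * (g + ((1 - r * A) * (1 + 2 * g) - g))\<^sup>2 =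
      r * ((A * (1 + 2 * g) - g) + ((1 - r * A) * (1 + 2 * g) - g) - 1)\<^sup>2
      + (1 - r) * (g - ((1 - r * A) * (1 + 2 * g) - g) + 1)\<^sup>2
      + r * (A * (1 + g - (A * (1 + 2 * g) - g))\<^sup>2 + (1 - A) * (g + (A * (1 + 2 * g) - g))\<^sup>2)"
    by algebra
  then show ?thesis using lhs rhs by linarith
qed

lemma poisson_sol_rec:
  "poisson_sol \<delta> m
     = increment_var \<delta> m - diffusion_rate \<delta> + recross_prob \<delta> m * poisson_sol \<delta> (Suc m)"
  unfolding poisson_sol_def
  using residual_var_rec[of m] run_sum_rec[OF \<delta>_pos \<delta>_le_1, of m] by (simp add: algebra_simps)

lemma poisson_sol_one: "poisson_sol \<delta> 1 = 0"
  using run_sum_ge_one[OF \<delta>_pos \<delta>_le_1, of 1] by (simp add: poisson_sol_def diffusion_rate_def)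

lemma step_op_poisson_sol:
  "step_op \<delta> (\<lambda>s e m. poisson_sol \<delta> m) =
     (\<lambda>s e m. poisson_sol \<delta> m - increment_var \<delta> m + diffusion_rate \<delta>)"
proof (intro ext)
  fix s e m
  show "step_op \<delta> (\<lambda>s e m. poisson_sol \<delta> m) s e m =
          poisson_sol \<delta> m - increment_var \<delta> m + diffusion_rate \<delta>"
    using poisson_sol_rec[of m] poisson_sol_one by (simp add: step_op_def)
qed

lemma harmonic_coeff_bounded: "\<exists>B. \<forall>m. \<bar>harmonic_coeff \<delta> m\<bar> \<le> B"
proof (intro exI allI)
  fix m
  have "\<bar>harmonic_coeff \<delta> m\<bar> \<le> \<bar>alt_run_sum \<delta> m\<bar> * \<bar>1 + 2 * harmonic_base \<delta>\<bar> + \<bar>harmonic_base \<delta>\<bar>"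
    unfolding harmonic_coeff_def by (metis abs_mult abs_triangle_ineq4)
  also have "\<dots> \<le> (1 / \<delta>) * \<bar>1 + 2 * harmonic_base \<delta>\<bar> + \<bar>harmonic_base \<delta>\<bar>"
    by (intro add_mono mult_right_mono abs_alt_run_sum_le[OF \<delta>_pos \<delta>_le_1]) auto
  finally show "\<bar>harmonic_coeff \<delta> m\<bar> \<le> \<dots>" .
qed

lemma poisson_sol_bounded: "\<exists>B. \<forall>m. \<bar>poisson_sol \<delta> m\<bar> \<le> B"
proof -
  obtain H where H: "\<And>m. \<bar>harmonic_coeff \<delta> m\<bar> \<le> H"
    using harmonic_coeff_bounded by blast
  define g where "g = \<bar>harmonic_base \<delta>\<bar>"
  have "\<bar>poisson_sol \<delta> m\<bar> \<le> (1 / \<delta>) * (1 + g + H)\<^sup>2 + (1 + 1 / \<delta>) * (g + H)\<^sup>2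
                            + \<bar>diffusion_rate \<delta>\<bar> / \<delta>" for m
  proof -
    have A: "\<bar>alt_run_sum \<delta> m\<bar> \<le> 1 / \<delta>" "\<bar>1 - alt_run_sum \<delta> m\<bar> \<le> 1 + 1 / \<delta>"
      using abs_alt_run_sum_le[OF \<delta>_pos \<delta>_le_1, of m] by auto
    have sq: "(1 + harmonic_base \<delta> - harmonic_coeff \<delta> m)\<^sup>2 \<le> (1 + g + H)\<^sup>2"
      "(harmonic_base \<delta> + harmonic_coeff \<delta> m)\<^sup>2 \<le> (g + H)\<^sup>2"
      using H[of m] by (auto simp: g_def abs_le_square_iff[symmetric] abs_le_iff)
    have "\<bar>residual_var \<delta> m\<bar> \<le> \<bar>alt_run_sum \<delta> m\<bar> * (1 + harmonic_base \<delta> - harmonic_coeff \<delta> m)\<^sup>2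
                          + \<bar>1 - alt_run_sum \<delta> m\<bar> * (harmonic_base \<delta> + harmonic_coeff \<delta> m)\<^sup>2"
      unfolding residual_var_def by (metis (no_types) abs_mult abs_power2 abs_triangle_ineq)
    also have "\<dots> \<le> (1 / \<delta>) * (1 + g + H)\<^sup>2 + (1 + 1 / \<delta>) * (g + H)\<^sup>2"
      by (intro add_mono mult_mono A sq) (use \<delta>_pos in auto)
    finally have "\<bar>residual_var \<delta> m\<bar> \<le> \<dots>" .
    moreover have "\<bar>diffusion_rate \<delta> * run_sum \<delta> m\<bar> \<le> \<bar>diffusion_rate \<delta>\<bar> / \<delta>"
      using run_sum_le[OF \<delta>_pos \<delta>_le_1, of m] run_sum_nonneg[OF \<delta>_pos \<delta>_le_1, of m]
      by (simp add: abs_mult mult_left_mono divide_inverse)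
    ultimately show ?thesis
      unfolding poisson_sol_def by linarith
  qed
  then show ?thesis by blast
qed

lemma squared_position_martingale_close:
  "\<exists>H\<ge>0. \<forall>s e m. reachable_state e m \<longrightarrow>
     \<bar>(real_of_int s)\<^sup>2 - (martingale \<delta> s e m)\<^sup>2\<bar> \<le> 2 * H * \<bar>martingale \<delta> s e m\<bar> + H\<^sup>2"
proof -
  obtain B where B: "\<And>m. \<bar>harmonic_coeff \<delta> m\<bar> \<le> B"
    using harmonic_coeff_bounded by blast
  define H where "H = \<bar>B\<bar> + 1"
  have "\<bar>(real_of_int s)\<^sup>2 - (martingale \<delta> s e m)\<^sup>2\<bar> \<le> 2 * H * \<bar>martingale \<delta> s e m\<bar> + H\<^sup>2"
    if "reachable_state e m" for s e m
  proof -
    define M where "M = martingale \<delta> s e m"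
    define c where "c = real_of_int e * (harmonic_coeff \<delta> m - 1)"
    have c: "\<bar>c\<bar> \<le> H"
      using that B[of m] by (auto simp: reachable_state_def c_def H_def)
    have "(real_of_int s)\<^sup>2 - M\<^sup>2 = c\<^sup>2 - 2 * c * M"
      by (simp add: M_def martingale_def c_def power2_eq_square algebra_simps)
    moreover have "\<bar>c\<^sup>2 - 2 * c * M\<bar> \<le> c\<^sup>2 + 2 * \<bar>c\<bar> * \<bar>M\<bar>"
      by (rule order_trans[OF abs_triangle_ineq4]) (simp add: abs_mult)
    moreover have "c\<^sup>2 \<le> H\<^sup>2"
      using c by (simp add: H_def abs_le_square_iff[symmetric])
    ultimately show ?thesis
      using mult_right_mono[OF c abs_ge_zero[of M]] unfolding M_def by simp
  qed
  then show ?thesis by (intro exI[of _ H]) (simp add: H_def)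
qed

end

context
  fixes \<delta> :: real
  assumes \<delta>_pos: "0 < \<delta>" and \<delta>_less: "\<delta> < 2/3"
begin

private lemma \<delta>_le_1: "\<delta> \<le> 1"
  using \<delta>_less by simp

lemma recross_prob_one: "recross_prob \<delta> 1 = 2/3 - \<delta>"
  using \<delta>_less by (simp add: recross_prob_def)

lemma alt_run_sum_pos: "0 < alt_run_sum \<delta> 1"
proof -
  have "0 < 1 - recross_prob \<delta> 1" using recross_prob_one \<delta>_pos by simp
  also have "\<dots> = tau_prob \<delta> 1" by (rule tau_prob_1[symmetric])
  also have "\<dots> \<le> tau_odd \<delta>" by (rule tau_prob_1_le_tau_odd[OF \<delta>_pos \<delta>_le_1])
  also have "\<dots> = alt_run_sum \<delta> 1" by (rule tau_odd_eq[OF \<delta>_pos \<delta>_le_1])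
  finally show ?thesis .
qed

text \<open>This is where \<delta> < 2/3 is needed: otherwise the first edge is never recrossed, so
  \<tau> = 1 almost surely and \<tau> is never even.\<close>

lemma alt_run_sum_less_one: "alt_run_sum \<delta> 1 < 1"
proof -
  have "0 < recross_prob \<delta> 1 * (1 - recross_prob \<delta> 2)"
    using recross_prob_one recross_prob_le[OF \<delta>_pos \<delta>_le_1, of 2] \<delta>_pos \<delta>_less
    by (intro mult_pos_pos) auto
  also have "\<dots> = tau_prob \<delta> 2" by (rule tau_prob_2[symmetric])
  also have "\<dots> \<le> tau_even \<delta>" by (rule tau_prob_2_le_tau_even[OF \<delta>_pos \<delta>_le_1])
  also have "\<dots> = 1 - alt_run_sum \<delta> 1" by (rule tau_even_eq[OF \<delta>_pos \<delta>_le_1])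
  finally show ?thesis by simp
qed

lemma harmonic_coeff_one: "harmonic_coeff \<delta> 1 = harmonic_base \<delta>"
proof -
  define A where "A = alt_run_sum \<delta> 1"
  have "1 - A \<noteq> 0" using alt_run_sum_less_one by (simp add: A_def)
  then have "1 + 2 * (A / (2 * (1 - A))) = 1 / (1 - A)"
    by (simp add: field_simps)
  moreover have "A / (2 * (1 - A)) + A / (2 * (1 - A)) = A / (1 - A)"
    by (simp add: divide_simps)
  ultimately have "A * (1 + 2 * (A / (2 * (1 - A)))) - A / (2 * (1 - A)) = A / (2 * (1 - A))"
    by simp
  then show ?thesis by (simp add: harmonic_coeff_def harmonic_base_def A_def)
qed

text \<open>The cross term of the expansion vanishes by harmonicity of the martingale, leaving the
  conditional second moment of its increment.\<close>

lemma step_op_martingale_squared: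
  "step_op \<delta> (\<lambda>s e m. (martingale \<delta> s e m)\<^sup>2)
     = (\<lambda>s e m. (martingale \<delta> s e m)\<^sup>2 + (real_of_int e)\<^sup>2 * increment_var \<delta> m)"
proof (intro ext)
  fix s e m
  define r where "r = recross_prob \<delta> m"
  define a where "a = harmonic_coeff \<delta> (Suc m)"
  define g where "g = harmonic_base \<delta>"
  define S where "S = real_of_int s"
  define E where "E = real_of_int e"
  have h: "harmonic_coeff \<delta> m = 1 + (1 - r) * g - r * a"
    unfolding r_def a_def g_def by (rule harmonic_coeff_rec[OF \<delta>_pos \<delta>_le_1])
  have "step_op \<delta> (\<lambda>s e m. (martingale \<delta> s e m)\<^sup>2) s e m
          = r * ((S - E) + (- E) * (a - 1))\<^sup>2 + (1 - r) * ((S + E) + E * (g - 1))\<^sup>2"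
    unfolding step_op_def martingale_def harmonic_coeff_one r_def a_def g_def S_def E_def by simp
  also have "\<dots> = (S + E * ((1 + (1 - r) * g - r * a) - 1))\<^sup>2
      + E\<^sup>2 * (r * (a + (1 + (1 - r) * g - r * a) - 1)\<^sup>2
                 + (1 - r) * (g - (1 + (1 - r) * g - r * a) + 1)\<^sup>2)"
    by algebra
  also have "\<dots> = (martingale \<delta> s e m)\<^sup>2 + (real_of_int e)\<^sup>2 * increment_var \<delta> m"
    unfolding martingale_def increment_var_def h
    unfolding r_def[symmetric] a_def[symmetric] g_def[symmetric] S_def E_def ..
  finally show "step_op \<delta> (\<lambda>s e m. (martingale \<delta> s e m)\<^sup>2) s e m = \<dots>" .
qed

lemma residual_var_one: "residual_var \<delta> 1 = alt_run_sum \<delta> 1 / (1 - alt_run_sum \<delta> 1)"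
proof -
  define A where "A = alt_run_sum \<delta> 1"
  have "1 - A \<noteq> 0" using alt_run_sum_less_one by (simp add: A_def)
  then have "(1 - A) * (A / (1 - A))\<^sup>2 = A\<^sup>2 / (1 - A)"
    by (simp add: power2_eq_square)
  moreover have "A * 1\<^sup>2 + A\<^sup>2 / (1 - A) = A / (1 - A)"
    using \<open>1 - A \<noteq> 0\<close> by (simp add: power2_eq_square field_simps)
  moreover have "A / (2 * (1 - A)) + A / (2 * (1 - A)) = A / (1 - A)"
    by (simp add: divide_simps)
  ultimately show ?thesis
    unfolding residual_var_def harmonic_coeff_one harmonic_base_def A_def[symmetric] by simp
qed

lemma diffusion_rate_eq_tau: "diffusion_rate \<delta> = tau_odd \<delta> / (tau_even \<delta> * tau_mean \<delta>)"
  unfolding diffusion_rate_def residual_var_one tau_odd_eq[OF \<delta>_pos \<delta>_le_1]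
    tau_even_eq[OF \<delta>_pos \<delta>_le_1] tau_mean_eq[OF \<delta>_pos \<delta>_le_1]
  by simp

lemma diffusion_rate_pos: "0 < diffusion_rate \<delta>"
  unfolding diffusion_rate_def residual_var_one
  using alt_run_sum_pos alt_run_sum_less_one run_sum_ge_one[OF \<delta>_pos \<delta>_le_1, of 1] by simp

subsection \<open>The diffusion limit\<close>

lemma martingale_squared_drift:
  "\<exists>K. \<forall>n. \<bar>chain_exp \<delta> n (\<lambda>s e m. (martingale \<delta> s e m)\<^sup>2) - real n * diffusion_rate \<delta>\<bar> \<le> K"
proof -
  define Y where "Y n = chain_exp \<delta> n (\<lambda>s e m. (martingale \<delta> s e m)\<^sup>2)" for n
  define P where "P n = chain_exp \<delta> n (\<lambda>s e m. poisson_sol \<delta> m)" for n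
  obtain B where B: "\<And>m. \<bar>poisson_sol \<delta> m\<bar> \<le> B"
    using poisson_sol_bounded[OF \<delta>_pos \<delta>_le_1] by blast
  have P_bound: "\<bar>P n\<bar> \<le> B" for n
  proof -
    have "- B \<le> poisson_sol \<delta> m" "poisson_sol \<delta> m \<le> B" for m
      using B[of m] by auto
    then have "chain_exp \<delta> n (\<lambda>s e m. - B) \<le> P n" "P n \<le> chain_exp \<delta> n (\<lambda>s e m. B)"
      unfolding P_def by (auto intro!: chain_exp_mono[OF \<delta>_pos])
    then show ?thesis by (simp add: chain_exp_const)
  qed
  txt \<open>The Poisson corrector turns the state-dependent quadratic variation into the constant
    diffusion_rate \<delta>, up to a telescoping error.\<close>
  have step: "Y (Suc n) = Y n + P n - P (Suc n) + diffusion_rate \<delta>" for n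
  proof -
    have "Y (Suc n) = chain_exp \<delta> n
            (\<lambda>s e m. (martingale \<delta> s e m)\<^sup>2 + (real_of_int e)\<^sup>2 * increment_var \<delta> m)"
      unfolding Y_def chain_exp_Suc step_op_martingale_squared ..
    also have "\<dots> = chain_exp \<delta> n (\<lambda>s e m. ((martingale \<delta> s e m)\<^sup>2 + poisson_sol \<delta> m)
                        - step_op \<delta> (\<lambda>s e m. poisson_sol \<delta> m) s e m + diffusion_rate \<delta>)"
      by (rule chain_exp_cong[OF \<delta>_pos])
         (auto simp: reachable_state_def step_op_poisson_sol[OF \<delta>_pos \<delta>_le_1])
    also have "\<dots> = Y n + P n - P (Suc n) + diffusion_rate \<delta>"
      unfolding chain_exp_add_const chain_exp_diff chain_exp_add Y_def P_def chain_exp_Suc ..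
    finally show ?thesis .
  qed
  have Y_eq: "Y n = Y 0 + P 0 - P n + real n * diffusion_rate \<delta>" for n
    by (induction n) (simp_all add: step algebra_simps)
  have "\<bar>Y n - real n * diffusion_rate \<delta>\<bar> \<le> \<bar>Y 0\<bar> + \<bar>P 0\<bar> + B" for n
    using Y_eq[of n] P_bound[of n] by linarith
  then show ?thesis unfolding Y_def by blast
qed

lemma msd_martingale_close:
  "\<exists>H\<ge>0. \<forall>n. \<bar>msd \<delta> (Suc n) - chain_exp \<delta> n (\<lambda>s e m. (martingale \<delta> s e m)\<^sup>2)\<bar>
              \<le> 2 * H * sqrt (chain_exp \<delta> n (\<lambda>s e m. (martingale \<delta> s e m)\<^sup>2)) + H\<^sup>2"
proof -
  define M where "M = martingale \<delta>"
  obtain H where H0: "0 \<le> H" and pointwise: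
    "\<And>s e m. reachable_state e m \<Longrightarrow> \<bar>(real_of_int s)\<^sup>2 - (M s e m)\<^sup>2\<bar> \<le> 2 * H * \<bar>M s e m\<bar> + H\<^sup>2"
    using squared_position_martingale_close[OF \<delta>_pos \<delta>_le_1] unfolding M_def by blast
  have pointwise_bounds:
    "(real_of_int s)\<^sup>2 \<le> (M s e m)\<^sup>2 + 2 * H * \<bar>M s e m\<bar> + H\<^sup>2"
    "(M s e m)\<^sup>2 - 2 * H * \<bar>M s e m\<bar> - H\<^sup>2 \<le> (real_of_int s)\<^sup>2"
    if "reachable_state e m" for s e m
    using pointwise[OF that, of s] unfolding abs_le_iff by linarith+
  have "\<bar>msd \<delta> (Suc n) - chain_exp \<delta> n (\<lambda>s e m. (M s e m)\<^sup>2)\<bar>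
        \<le> 2 * H * sqrt (chain_exp \<delta> n (\<lambda>s e m. (M s e m)\<^sup>2)) + H\<^sup>2" for n
  proof -
    have up: "msd \<delta> (Suc n) \<le> chain_exp \<delta> n (\<lambda>s e m. (M s e m)\<^sup>2 + 2 * H * \<bar>M s e m\<bar> + H\<^sup>2)"
      unfolding msd_Suc by (rule chain_exp_mono[OF \<delta>_pos]) (rule pointwise_bounds)
    have lo: "chain_exp \<delta> n (\<lambda>s e m. (M s e m)\<^sup>2 - 2 * H * \<bar>M s e m\<bar> - H\<^sup>2) \<le> msd \<delta> (Suc n)"
      unfolding msd_Suc by (rule chain_exp_mono[OF \<delta>_pos]) (rule pointwise_bounds)
    have "chain_exp \<delta> n (\<lambda>s e m. \<bar>M s e m\<bar>) \<le> sqrt (chain_exp \<delta> n (\<lambda>s e m. (M s e m)\<^sup>2))"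
      by (rule real_le_rsqrt[OF chain_exp_abs_squared_le[OF \<delta>_pos]])
    from mult_left_mono[OF this, of "2 * H"]
    have "2 * H * chain_exp \<delta> n (\<lambda>s e m. \<bar>M s e m\<bar>)
                 \<le> 2 * H * sqrt (chain_exp \<delta> n (\<lambda>s e m. (M s e m)\<^sup>2))"
      using H0 by simp
    with up lo show ?thesis
      unfolding abs_le_iff chain_exp_add chain_exp_diff chain_exp_cmult chain_exp_const
      by (intro conjI) linarith+
  qed
  then show ?thesis using H0 unfolding M_def by blast
qed

lemma msd_over_n_tendsto: "(\<lambda>n. msd \<delta> n / real n) \<longlonglongrightarrow> diffusion_rate \<delta>"
proof -
  define c where "c = diffusion_rate \<delta>"
  define Y where "Y n = chain_exp \<delta> n (\<lambda>s e m. (martingale \<delta> s e m)\<^sup>2)" for n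
  obtain K where K: "\<And>n. \<bar>Y n - real n * c\<bar> \<le> K"
    using martingale_squared_drift unfolding Y_def c_def by blast
  obtain H where H0: "0 \<le> H" and H: "\<And>n. \<bar>msd \<delta> (Suc n) - Y n\<bar> \<le> 2 * H * sqrt (Y n) + H\<^sup>2"
    using msd_martingale_close unfolding Y_def by blast
  have c0: "0 < c" unfolding c_def by (rule diffusion_rate_pos)
  have K0: "0 \<le> K" using K[of 0] by linarith
  have bound: "\<bar>msd \<delta> (Suc n) / real (Suc n) - c\<bar>
                 \<le> (2 * H * sqrt ((real n + 1) * (c + K)) + H\<^sup>2 + K + c) / (real n + 1)" for n
  proof -
    have "Y n \<le> real n * c + K"
      using K[of n] by (simp add: abs_le_iff)
    moreover have "(real n + 1) * (c + K) = real n * c + K + (c + real n * K)"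
      by (simp add: algebra_simps)
    ultimately have "Y n \<le> (real n + 1) * (c + K)"
      using c0 K0 by (simp add: add_increasing2)
    then have "2 * H * sqrt (Y n) \<le> 2 * H * sqrt ((real n + 1) * (c + K))"
      using H0 by (intro mult_left_mono) auto
    then have "\<bar>msd \<delta> (Suc n) - (real n + 1) * c\<bar>
                 \<le> 2 * H * sqrt ((real n + 1) * (c + K)) + H\<^sup>2 + K + c"
      using H[of n] K[of n] c0 unfolding abs_le_iff by (simp add: algebra_simps)
    moreover have "msd \<delta> (Suc n) / real (Suc n) - c
                     = (msd \<delta> (Suc n) - (real n + 1) * c) / (real n + 1)"
      by (simp add: field_simps)
    ultimately show ?thesis
      by (simp add: divide_right_mono)
  qed
  have "(\<lambda>n. (2 * H * sqrt ((real n + 1) * (c + K)) + H\<^sup>2 + K + c) / (real n + 1)) \<longlonglongrightarrow> 0"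
    using c0 K0 by real_asymp
  then have "(\<lambda>n. msd \<delta> (Suc n) / real (Suc n) - c) \<longlonglongrightarrow> 0"
    by (rule Lim_null_comparison[rotated]) (use bound in auto)
  then have "(\<lambda>n. msd \<delta> (Suc n) / real (Suc n)) \<longlonglongrightarrow> c"
    by (rule LIM_zero_cancel)
  then show ?thesis unfolding c_def by (rule LIMSEQ_imp_Suc)
qed

lemma diffusion_const_eq_rate: "diffusion_const \<delta> = diffusion_rate \<delta>"
  unfolding diffusion_const_def using msd_over_n_tendsto by (rule limI)

end

section \<open>Small \<delta> asymptotics\<close>

lemma ln_one_minus_sums:
  fixes y :: real assumes "0 \<le> y" "y < 1"
  shows "(\<lambda>j. y ^ Suc j / real (Suc j)) sums (- ln (1 - y))"
proof -
  have "(\<lambda>n. - ((- (- y)) ^ n) / of_nat n) sums ln (1 + - y)"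
    by (rule ln_series') (use assms in auto)
  then have "(\<lambda>n. - (- (y ^ n / real n))) sums (- ln (1 - y))"
    by (intro sums_minus) simp
  then have "(\<lambda>n. y ^ n / real n) sums (- ln (1 - y) + (y ^ 0 / real 0))" by simp
  then show ?thesis by (subst sums_Suc_iff)
qed

lemma telescoping_factor:
  "2 / (real j + 2) * ((real j + 2) / (real j + 3)) = 2 / (real (Suc j) + 2)"
proof -
  have "real j + 2 \<noteq> 0" by linarith
  then have "2 / (real j + 2) * ((real j + 2) / b) = 2 / b" for b :: real
    by (simp add: divide_simps)
  then show ?thesis by simp
qed

context
  fixes \<delta> :: real
  assumes \<delta>_pos: "0 < \<delta>" and \<delta>_small: "\<delta> \<le> 1/3"
begin

lemma recross_prob_Suc_bounds:
  "(real j + 2) / (real j + 3) * (1 - 3/2 * \<delta>) \<le> recross_prob \<delta> (Suc j)"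
  "recross_prob \<delta> (Suc j) \<le> (real j + 2) / (real j + 3) * (1 - \<delta>)"
proof -
  define x where "x = (real j + 2) / (real j + 3)"
  have x: "2/3 \<le> x" "x \<le> 1" by (simp_all add: x_def field_simps)
  have "(1 + real (Suc j)) / (2 + real (Suc j)) = x"
    by (simp add: x_def algebra_simps)
  then have r: "recross_prob \<delta> (Suc j) = x - \<delta>"
    using x \<delta>_small by (simp add: recross_prob_def)
  have "\<delta> \<le> 3/2 * \<delta> * x" "\<delta> * x \<le> \<delta>"
    using x \<delta>_pos mult_left_mono[OF x(1), of "3/2 * \<delta>"] mult_left_mono[OF x(2), of \<delta>] by simp_all
  then show "x * (1 - 3/2 * \<delta>) \<le> recross_prob \<delta> (Suc j)" "recross_prob \<delta> (Suc j) \<le> x * (1 - \<delta>)"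
    unfolding r by (simp_all add: algebra_simps)
qed

text \<open>The factors (j + 2) / (j + 3) telescope to 2 / (j + 2), so run_prob \<delta> 1 j is
  2 / (j + 2) times a geometric factor, and summing over j produces a logarithm of \<delta>.\<close>

lemma run_prob_one_le: "run_prob \<delta> 1 j \<le> 2 / (real j + 2) * (1 - \<delta>) ^ j"
proof (induction j)
  case (Suc j)
  have "run_prob \<delta> 1 (Suc j) = run_prob \<delta> 1 j * recross_prob \<delta> (Suc j)"
    by (simp add: run_prob_Suc_right)
  also have "\<dots> \<le> (2 / (real j + 2) * (1 - \<delta>) ^ j) * ((real j + 2) / (real j + 3) * (1 - \<delta>))"
    by (intro mult_mono Suc recross_prob_Suc_bounds run_prob_nonneg)
       (use \<delta>_small recross_prob_nonneg in auto)
  also have "\<dots> = (2 / (real j + 2) * ((real j + 2) / (real j + 3))) * ((1 - \<delta>) ^ j * (1 - \<delta>))"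
    by (simp only: ac_simps)
  also have "\<dots> = 2 / (real (Suc j) + 2) * (1 - \<delta>) ^ Suc j"
    unfolding telescoping_factor by (simp add: power_Suc2)
  finally show ?case .
qed simp

lemma run_prob_one_ge: "2 / (real j + 2) * (1 - 3/2 * \<delta>) ^ j \<le> run_prob \<delta> 1 j"
proof (induction j)
  case (Suc j)
  have "2 / (real (Suc j) + 2) * (1 - 3/2 * \<delta>) ^ Suc j
      = (2 / (real j + 2) * ((real j + 2) / (real j + 3))) * ((1 - 3/2 * \<delta>) ^ j * (1 - 3/2 * \<delta>))"
    unfolding telescoping_factor by (simp add: power_Suc2)
  also have "\<dots> = (2 / (real j + 2) * (1 - 3/2 * \<delta>) ^ j)
                   * ((real j + 2) / (real j + 3) * (1 - 3/2 * \<delta>))"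
    by (simp only: ac_simps)
  also have "\<dots> \<le> run_prob \<delta> 1 j * recross_prob \<delta> (Suc j)"
    by (intro mult_mono Suc recross_prob_Suc_bounds) (use \<delta>_small run_prob_nonneg in auto)
  also have "\<dots> = run_prob \<delta> 1 (Suc j)"
    by (simp add: run_prob_Suc_right)
  finally show ?case .
qed simp

lemma run_sum_one_le: "run_sum \<delta> 1 \<le> 3 * - ln \<delta>"
proof -
  have s: "(\<lambda>j. 3 * ((1 - \<delta>) ^ Suc j / real (Suc j))) sums (3 * - ln (1 - (1 - \<delta>)))"
    by (intro sums_mult ln_one_minus_sums) (use \<delta>_pos \<delta>_small in auto)
  have "run_sum \<delta> 1 \<le> (\<Sum>j. 3 * ((1 - \<delta>) ^ Suc j / real (Suc j)))"
    unfolding run_sum_def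
  proof (rule suminf_le[OF _ summable_run_prob sums_summable[OF s]])
    fix j
    have "2 * (real j + 1) \<le> 3 * (1 - \<delta>) * (real j + 2)"
      using \<delta>_small mult_right_mono[of 2 "3 * (1 - \<delta>)" "real j + 2"] by simp
    then have "2 / (real j + 2) \<le> 3 * (1 - \<delta>) / (real j + 1)"
      by (simp add: field_simps)
    then have "2 / (real j + 2) * (1 - \<delta>) ^ j \<le> 3 * (1 - \<delta>) / (real j + 1) * (1 - \<delta>) ^ j"
      using \<delta>_small by (intro mult_right_mono) auto
    also have "\<dots> = 3 * ((1 - \<delta>) ^ Suc j / real (Suc j))"
      by (simp add: field_simps)
    finally show "run_prob \<delta> 1 j \<le> 3 * ((1 - \<delta>) ^ Suc j / real (Suc j))"
      using run_prob_one_le[of j] by linarith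
  qed (use \<delta>_pos \<delta>_small in auto)
  also have "\<dots> = 3 * - ln \<delta>" using s by (simp add: sums_iff)
  finally show ?thesis .
qed

lemma run_sum_one_ge_neg_ln_scaled: "- ln (3/2 * \<delta>) \<le> run_sum \<delta> 1"
proof -
  define y where "y = 1 - 3/2 * \<delta>"
  have y: "0 \<le> y" "y \<le> 1" using \<delta>_pos \<delta>_small by (auto simp: y_def)
  have s: "(\<lambda>j. y ^ Suc j / real (Suc j)) sums (- ln (3/2 * \<delta>))"
    using ln_one_minus_sums[of y] y \<delta>_pos by (simp add: y_def)
  have "(\<Sum>j. y ^ Suc j / real (Suc j)) \<le> run_sum \<delta> 1"
    unfolding run_sum_def
  proof (rule suminf_le[OF _ sums_summable[OF s] summable_run_prob])
    fix j
    have "y ^ Suc j / real (Suc j) \<le> y ^ j / real (Suc j)"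
      using y by (intro divide_right_mono) (simp_all add: mult_left_le_one_le)
    also have "\<dots> = 1 / (real j + 1) * y ^ j"
      by simp
    also have "\<dots> \<le> 2 / (real j + 2) * y ^ j"
      using y by (intro mult_right_mono) (simp_all add: field_simps)
    also have "\<dots> \<le> run_prob \<delta> 1 j" unfolding y_def by (rule run_prob_one_ge)
    finally show "y ^ Suc j / real (Suc j) \<le> run_prob \<delta> 1 j" .
  qed (use \<delta>_pos \<delta>_small in auto)
  then show ?thesis using s by (simp add: sums_iff)
qed

lemma run_sum_one_ge: "- ln \<delta> / 2 \<le> run_sum \<delta> 1"
proof -
  have "ln \<delta> \<le> ln (1/3)" using \<delta>_pos \<delta>_small by simp
  then have "ln 3 \<le> - ln \<delta>" by (simp add: ln_div)
  moreover have "2 * ln (3/2::real) \<le> ln 3"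
  proof -
    have "2 * ln (3/2::real) = ln ((3/2)^2)" by (simp add: ln_realpow)
    also have "\<dots> \<le> ln 3" by (simp add: power2_eq_square)
    finally show ?thesis .
  qed
  moreover have "ln (3/2 * \<delta>) = ln (3/2) + ln \<delta>"
    using \<delta>_pos by (intro ln_mult_pos) auto
  ultimately show ?thesis using run_sum_one_ge_neg_ln_scaled by linarith
qed

lemma alt_run_sum_one_ge: "1/3 \<le> alt_run_sum \<delta> 1"
proof -
  have "1/3 \<le> tau_prob \<delta> 1"
    unfolding tau_prob_1 using \<delta>_pos \<delta>_small by (simp add: recross_prob_def)
  also have "\<dots> \<le> alt_run_sum \<delta> 1"
    using tau_prob_1_le_tau_odd tau_odd_eq \<delta>_pos \<delta>_small by simp
  finally show ?thesis .
qed

lemma alt_run_sum_one_le: "alt_run_sum \<delta> 1 \<le> 11/12"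
proof -
  have "(1/3::real) * (1/4) \<le> (2/3 - \<delta>) * (1/4 + \<delta>)"
    by (intro mult_mono) (use \<delta>_pos \<delta>_small in auto)
  also have "\<dots> = tau_prob \<delta> 2"
    unfolding tau_prob_2 using \<delta>_small by (simp add: recross_prob_def)
  also have "\<dots> \<le> 1 - alt_run_sum \<delta> 1"
    using tau_prob_2_le_tau_even tau_even_eq \<delta>_pos \<delta>_small by simp
  finally show ?thesis by simp
qed

lemma diffusion_const_log_bounds:
  "1 / (9 * \<bar>ln \<delta>\<bar>) \<le> diffusion_const \<delta> \<and> diffusion_const \<delta> \<le> 24 / \<bar>ln \<delta>\<bar>"
proof -
  define A where "A = alt_run_sum \<delta> 1"
  define L where "L = run_sum \<delta> 1"
  define l where "l = \<bar>ln \<delta>\<bar>"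
  have l: "l = - ln \<delta>" "0 < l" using \<delta>_pos \<delta>_small by (auto simp: l_def)
  have "diffusion_const \<delta> = A / ((1 - A) * L)"
    using \<delta>_pos \<delta>_small
    by (simp add: diffusion_const_eq_rate diffusion_rate_eq_tau tau_odd_eq tau_even_eq tau_mean_eq
        A_def L_def)
  moreover have A: "1/3 \<le> A" "A \<le> 11/12" "A \<le> 1"
    using alt_run_sum_one_ge alt_run_sum_one_le by (simp_all add: A_def)
  moreover have L: "l / 2 \<le> L" "L \<le> 3 * l"
    using run_sum_one_ge run_sum_one_le by (simp_all add: L_def l)
  moreover have "1 / (9 * l) \<le> A / ((1 - A) * L)"
  proof -
    have "1 / (9 * l) = (1/3) / (1 * (3 * l))" by simp
    also have "\<dots> \<le> A / ((1 - A) * L)"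
      using A L l by (intro frac_le mult_mono) auto
    finally show ?thesis .
  qed
  moreover have "A / ((1 - A) * L) \<le> 24 / l"
  proof -
    have "A / ((1 - A) * L) \<le> 1 / ((1/12) * (l / 2))"
      using A L l by (intro frac_le mult_mono) auto
    also have "\<dots> = 24 / l" by simp
    finally show ?thesis .
  qed
  ultimately show ?thesis by (simp add: l_def)
qed

end

theorem theorem3:
  shows "(\<forall>\<delta>::real. 0 < \<delta> \<and> \<delta> < 2/3 \<longrightarrow>
            (\<lambda>n. msd \<delta> n / real n) \<longlonglongrightarrow> diffusion_const \<delta>
          \<and> diffusion_const \<delta> > 0
          \<and> summable (\<lambda>k. real k * tau_prob \<delta> k)
          \<and> diffusion_const \<delta> = tau_odd \<delta> / (tau_even \<delta> * tau_mean \<delta>))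
       \<and> (diffusion_const \<longlongrightarrow> 0) (at_right 0)
       \<and> (\<exists>c C. 0 < c \<and> c \<le> C \<and>
           (\<forall>\<^sub>F \<delta> in at_right 0.
              c / \<bar>ln \<delta>\<bar> \<le> diffusion_const \<delta> \<and> diffusion_const \<delta> \<le> C / \<bar>ln \<delta>\<bar>))"
proof -
  have "\<forall>\<^sub>F \<delta> in at_right 0. \<delta> \<in> {0<..<1/3::real}"
    by (rule eventually_at_right_real) simp
  then have bounds: "\<forall>\<^sub>F \<delta> in at_right 0.
      1 / (9 * \<bar>ln \<delta>\<bar>) \<le> diffusion_const \<delta> \<and> diffusion_const \<delta> \<le> 24 / \<bar>ln \<delta>\<bar>"
    by (rule eventually_mono) (rule diffusion_const_log_bounds; simp)
  have "(diffusion_const \<longlongrightarrow> 0) (at_right 0)"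
  proof (rule tendsto_sandwich[of "\<lambda>_. 0" _ _ "\<lambda>\<delta>::real. 24 / \<bar>ln \<delta>\<bar>"])
    show "\<forall>\<^sub>F \<delta> in at_right 0. 0 \<le> diffusion_const \<delta>"
      using bounds by (rule eventually_mono) (auto intro: order_trans[rotated])
    show "((\<lambda>\<delta>::real. 24 / \<bar>ln \<delta>\<bar>) \<longlongrightarrow> 0) (at_right 0)"
      by real_asymp
  qed (use bounds in \<open>auto elim: eventually_mono\<close>)
  moreover have "\<exists>c C. 0 < c \<and> c \<le> C \<and> (\<forall>\<^sub>F \<delta> in at_right 0.
          c / \<bar>ln \<delta>\<bar> \<le> diffusion_const \<delta> \<and> diffusion_const \<delta> \<le> C / \<bar>ln \<delta>\<bar>)"
    using bounds by (intro exI[of _ "1/9"] exI[of _ 24]) simp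
  ultimately show ?thesis
    using msd_over_n_tendsto diffusion_rate_pos summable_mean_tau diffusion_rate_eq_tau
      diffusion_const_eq_rate
    by simp
qed

end
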